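(* Let $V=\mathbb R^{p,q}$, let $W$ be a $C\ell^0(V)$-module, let $\Pi:\wedge^2W\to V$ be an $\mathfrak o(V)$-equivariant linear map, and let $p=p'+p''$ with $p'\equiv 3\pmod 4$. Then: (1) If $(\tilde e_1,\dots,\tilde e_{p'})$ is an orthonormal basis of $E$ with $\tilde e_1\wedge\cdots\wedge\tilde e_{p'}=\pm e_1\wedge\cdots\wedge e_{p'}$, then $b_{\Pi,(\tilde e_i)}=\pm b$; in particular $b_{\Pi,(\tilde e_i)}=b$ for every positively oriented orthonormal basis of $E$. (2) $b$ is symmetric. (3) $b$ is invariant under the group $K(p',p'')=\mathrm{Spin}(p')\cdot\mathrm{Spin}_0(p'',q)$. (4) Under the identification $\mathfrak o(V)=\wedge^2V=\wedge^2E\oplus\wedge^2E'\oplus E\wedge E'$, every element of $E\wedge E'$ acts on $W$ by a $b$-symmetric endomorphism, and every element of $\wedge^2E\oplus\wedge^2E'\cong\mathfrak o(p')\oplus\mathfrak o(p'',q)$ acts on $W$ by a $b$-skew-symmetric endomorphism.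
   Context: Let $V=\mathbb{R}^{p,q}$ be $\mathbb R^{p+q}$ with the scalar product $\langle x,y\rangle=\sum_{i=1}^{p}x^iy^i-\sum_{j=p+1}^{p+q}x^jy^j$ and its standard orthonormal basis. The Clifford algebra $C\ell(V)=C\ell_{p,q}$ is the associative algebra generated by $V$ subject to $xy+yx=-2\langle x,y\rangle 1$; it is $\mathbb{Z}_2$-graded, $C\ell(V)=C\ell^0(V)\oplus C\ell^1(V)$. $\mathrm{Pin}(V)$ is the group generated by unit vectors ($\langle x,x\rangle=\pm1$), $\mathrm{Spin}(V)=\mathrm{Pin}(V)\cap C\ell^0(V)$, $\mathrm{Spin}_0(V)$ its identity component, and $\mathrm{Ad}(x)y=xyx^{-1}$. Identify $\mathfrak{o}(V)=\wedge^2V$ via $(x\wedge y)(z)=\langle y,z\rangle x-\langle x,z\rangle y$; the map $x\wedge y\mapsto-\frac14(xy-yx)$ is a Lie algebra isomorphism of $\mathfrak o(V)$ onto $\mathfrak{spin}(V)\subset C\ell^0(V)$, and via it $\mathfrak o(V)$ acts on any $C\ell^0(V)$-module $W$; "$\mathfrak o(V)$-equivariant" refers to this action. Fix a decomposition $p=p'+p''$ with $p'\equiv 3\pmod 4$. Let $e_1,\dots,e_{p'}$ be the first $p'$ standard basis vectors, spanning $E=\mathbb R^{p',0}$, and $e'_1,\dots,e'_{p''+q}$ the remaining ones, spanning $E'=E^\perp\cong\mathbb R^{p'',q}$. For an orthonormal basis $(\tilde e_i)$ of $E$ set $b_{\Pi,(\tilde e_i)}(s,t)=\langle\tilde e_1,\Pi(\tilde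 e_2\cdots\tilde e_{p'}s\wedge t)\rangle$ for $s,t\in W$ (Clifford product acting on $W$), and $b=b(\Pi)=b_{\Pi,(e_i)}$, the canonical symmetric bilinear form. $K(p',p'')=\mathrm{Spin}(p')\cdot\mathrm{Spin}_0(p'',q)\subset\mathrm{Spin}_0(p,q)$ denotes the connected subgroup generated by $\mathrm{Spin}(E)$ and $\mathrm{Spin}_0(E')$. *)

theory Defs
  imports "HOL-Analysis.Analysis"
begin

text \<open>Vectors of V = R^{p,q} are functions nat => real supported in {..<p+q}
  (index i corresponds to the (i+1)-st standard basis vector).
  Elements of the Clifford algebra Cl_{p,q} are coefficient functions on blades
  e_A (A a finite subset of {..<p+q}, factors in increasing order).\<close>

type_synonym vec = "nat \<Rightarrow> real"
type_synonym cl = "nat set \<Rightarrow> real"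

definition ip :: "nat \<Rightarrow> nat \<Rightarrow> vec \<Rightarrow> vec \<Rightarrow> real" where
  "ip p q x y = (\<Sum>i<p. x i * y i) - (\<Sum>i\<in>{p..<p+q}. x i * y i)"

definition in_V :: "nat \<Rightarrow> vec \<Rightarrow> bool" where
  "in_V n x \<longleftrightarrow> (\<forall>i\<ge>n. x i = 0)"

definition std_basis :: "nat \<Rightarrow> vec" where
  "std_basis i = (\<lambda>k. if k = i then 1 else 0)"

text \<open>e_i e_i = - <e_i,e_i> (convention xy + yx = -2<x,y>).\<close>
definition cl_sq :: "nat \<Rightarrow> nat \<Rightarrow> real" where
  "cl_sq p i = (if i < p then -1 else 1)"

definition blade_sign :: "nat \<Rightarrow> nat set \<Rightarrow> nat set \<Rightarrow> real" where
  "blade_sign p A B =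
     (-1) ^ card {(a,b). a \<in> A \<and> b \<in> B \<and> b < a} * (\<Prod>i\<in>A \<inter> B. cl_sq p i)"

definition clmul :: "nat \<Rightarrow> nat \<Rightarrow> cl \<Rightarrow> cl \<Rightarrow> cl" where
  "clmul p q x y = (\<lambda>C. \<Sum>A\<in>Pow {..<p+q}. \<Sum>B\<in>Pow {..<p+q}.
      if (A - B) \<union> (B - A) = C then blade_sign p A B * x A * y B else 0)"

definition cl_one :: cl where
  "cl_one = (\<lambda>A. if A = {} then 1 else 0)"

definition clvec :: "nat \<Rightarrow> nat \<Rightarrow> vec \<Rightarrow> cl" where
  "clvec p q v = (\<lambda>A. if \<exists>i<p+q. A = {i} then v (the_elem A) else 0)"

definition clprod :: "nat \<Rightarrow> nat \<Rightarrow> vec list \<Rightarrow> cl" where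
  "clprod p q vs = foldr (clmul p q) (map (clvec p q) vs) cl_one"

definition cl_even :: "nat \<Rightarrow> nat \<Rightarrow> cl set" where
  "cl_even p q = {x. \<forall>A. x A \<noteq> 0 \<longrightarrow> A \<subseteq> {..<p+q} \<and> even (card A)}"

definition cl0_module :: "nat \<Rightarrow> nat \<Rightarrow> (cl \<Rightarrow> 'w::real_vector \<Rightarrow> 'w) \<Rightarrow> bool" where
  "cl0_module p q \<rho> \<longleftrightarrow>
     (\<forall>x\<in>cl_even p q. linear (\<rho> x)) \<and>
     (\<forall>x\<in>cl_even p q. \<forall>y\<in>cl_even p q. \<forall>a::real.
        \<rho> (\<lambda>A. a * x A + y A) = (\<lambda>w. a *\<^sub>R \<rho> x w + \<rho> y w)) \<and>
     \<rho> cl_one = id \<and>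
     (\<forall>x\<in>cl_even p q. \<forall>y\<in>cl_even p q. \<rho> (clmul p q x y) = \<rho> x \<circ> \<rho> y)"

text \<open>A bivector \<Sum>_{i,j<p+q} c i j e_i \<and> e_j of o(V) = \<and>^2 V, its image
  -1/4 \<Sum> c i j (e_i e_j - e_j e_i) in spin(V), and its action on V.\<close>
definition spin_elt :: "nat \<Rightarrow> nat \<Rightarrow> (nat \<Rightarrow> nat \<Rightarrow> real) \<Rightarrow> cl" where
  "spin_elt p q c = (\<lambda>A. - (1/4) * (\<Sum>i<p+q. \<Sum>j<p+q. c i j *
      (clmul p q (clvec p q (std_basis i)) (clvec p q (std_basis j)) A
       - clmul p q (clvec p q (std_basis j)) (clvec p q (std_basis i)) A)))"

definition so_act_V :: "nat \<Rightarrow> nat \<Rightarrow> (nat \<Rightarrow> nat \<Rightarrow> real) \<Rightarrow> vec \<Rightarrow> vec" where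
  "so_act_V p q c z = (\<lambda>k. \<Sum>i<p+q. \<Sum>j<p+q. c i j *
      (ip p q (std_basis j) z * std_basis i k - ip p q (std_basis i) z * std_basis j k))"

text \<open>A linear map \<Pi> : \<and>^2 W -> V, encoded by the skew bilinear map (s,t) |-> \<Pi>(s \<and> t),
  which is o(V)-equivariant.\<close>
definition equivariant_pairing ::
  "nat \<Rightarrow> nat \<Rightarrow> (cl \<Rightarrow> 'w::real_vector \<Rightarrow> 'w) \<Rightarrow> ('w \<Rightarrow> 'w \<Rightarrow> vec) \<Rightarrow> bool" where
  "equivariant_pairing p q \<rho> Pr \<longleftrightarrow>
     (\<forall>s t. in_V (p+q) (Pr s t)) \<and>
     (\<forall>k. bilinear (\<lambda>s t. Pr s t k)) \<and>
     (\<forall>s t k. Pr s t k = - Pr t s k) \<and>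
     (\<forall>c s t. so_act_V p q c (Pr s t) =
        (\<lambda>k. Pr (\<rho> (spin_elt p q c) s) t k + Pr s (\<rho> (spin_elt p q c) t) k))"

text \<open>b_{Pr,(es)}(s,t) = < es_1, \<Pi>(es_2 ... es_{p'} s \<and> t) >, with es indexed from 0.\<close>
definition b_gen :: "nat \<Rightarrow> nat \<Rightarrow> nat \<Rightarrow> (cl \<Rightarrow> 'w::real_vector \<Rightarrow> 'w) \<Rightarrow> ('w \<Rightarrow> 'w \<Rightarrow> vec)
    \<Rightarrow> (nat \<Rightarrow> vec) \<Rightarrow> 'w \<Rightarrow> 'w \<Rightarrow> real" where
  "b_gen p q p' \<rho> Pr es s t =
     ip p q (es 0) (Pr (\<rho> (clprod p q (map es [1..<p'])) s) t)"

definition b_can :: "nat \<Rightarrow> nat \<Rightarrow> nat \<Rightarrow> (cl \<Rightarrow> 'w::real_vector \<Rightarrow> 'w) \<Rightarrow> ('w \<Rightarrow> 'w \<Rightarrow> vec)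
    \<Rightarrow> 'w \<Rightarrow> 'w \<Rightarrow> real" where
  "b_can p q p' \<rho> Pr = b_gen p q p' \<rho> Pr std_basis"

definition subE :: "nat \<Rightarrow> vec set" where
  "subE p' = {x. \<forall>i\<ge>p'. x i = 0}"

definition subE' :: "nat \<Rightarrow> nat \<Rightarrow> vec set" where
  "subE' p' n = {x. in_V n x \<and> (\<forall>i<p'. x i = 0)}"

definition onb_E :: "nat \<Rightarrow> nat \<Rightarrow> nat \<Rightarrow> (nat \<Rightarrow> vec) \<Rightarrow> bool" where
  "onb_E p q p' es \<longleftrightarrow> (\<forall>i<p'. es i \<in> subE p') \<and>
     (\<forall>i<p'. \<forall>j<p'. ip p q (es i) (es j) = (if i = j then 1 else 0))"

text \<open>Pin(S): group generated by unit vectors of S (every unit vector's inverse is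
  again +- a unit vector, so this is the set of finite products of unit vectors).\<close>
definition pin_grp :: "nat \<Rightarrow> nat \<Rightarrow> vec set \<Rightarrow> cl set" where
  "pin_grp p q S = {clprod p q xs | xs. \<forall>x\<in>set xs. x \<in> S \<and> (ip p q x x = 1 \<or> ip p q x x = -1)}"

definition spin_grp :: "nat \<Rightarrow> nat \<Rightarrow> vec set \<Rightarrow> cl set" where
  "spin_grp p q S = pin_grp p q S \<inter> cl_even p q"

text \<open>Identity component (product topology on cl, i.e. the Euclidean topology on
  the finite-dimensional algebra).\<close>
definition spin0_grp :: "nat \<Rightarrow> nat \<Rightarrow> vec set \<Rightarrow> cl set" where
  "spin0_grp p q S = connected_component_set (spin_grp p q S) cl_one"

definition gen_grp :: "nat \<Rightarrow> nat \<Rightarrow> cl set \<Rightarrow> cl set" where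
  "gen_grp p q G = {foldr (clmul p q) gs cl_one | gs. \<forall>g\<in>set gs. g \<in> G \<or>
      (\<exists>h\<in>G. clmul p q h g = cl_one \<and> clmul p q g h = cl_one)}"

definition K_grp :: "nat \<Rightarrow> nat \<Rightarrow> nat \<Rightarrow> cl set" where
  "K_grp p q p' = gen_grp p q (spin_grp p q (subE p') \<union> spin0_grp p q (subE' p' (p+q)))"

end

theory Submission
  imports Defs
begin

text \<open>
  Write \<open>u = e\<^sub>2 \<cdots> e\<^sub>p\<^sub>'\<close>, so that \<open>b(s, t) = \<Pi>(u s \<and> t)\<^sub>1\<close>. Equivariance of \<open>\<Pi>\<close> under the
  bivector \<open>e\<^sub>k \<and> e\<^sub>l\<close>, acting on \<open>W\<close> as \<open>-e\<^sub>k e\<^sub>l/2\<close>, relates \<open>\<Pi>(e\<^sub>k e\<^sub>l s \<and> t) + \<Pi>(s \<and> e\<^sub>k e\<^sub>l t)\<close>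
  to the components \<open>k\<close> and \<open>l\<close> of \<open>\<Pi>(s \<and> t)\<close>; in particular \<open>e\<^sub>k e\<^sub>l\<close> is skew for the first
  component when \<open>k, l \<noteq> 1\<close>. Moving the factors of \<open>u\<close> across therefore replaces \<open>u\<close> by its
  reversal, which is \<open>-u\<close> precisely because \<open>p' \<equiv> 3 (mod 4)\<close>, and skew-symmetry of \<open>\<Pi>\<close> makes \<open>b\<close>
  symmetric. Commuting \<open>e\<^sub>k e\<^sub>l\<close> past \<open>u\<close> costs a sign that depends only on whether \<open>k\<close>
  and \<open>l\<close> lie in the same block \<open>{1..p'}\<close> or \<open>{p'+1..p+q}\<close>, which gives (4).
  A pair \<open>x y\<close> of unit vectors in one block satisfies \<open>b(x y s, x y t) = \<langle>x,x\<rangle>\<langle>y,y\<rangle> b(s, t)\<close>;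
  this settles \<open>Spin(p')\<close>, while on \<open>Spin(p'', q)\<close> it gives invariance up to a sign that
  is constant on the identity component by continuity. For (1), the components of
  \<open>\<Pi>(e\<^sub>i e\<^sub>1 \<cdots> e\<^sub>p\<^sub>' s \<and> t)\<close> form, on \<open>E\<close>, a multiple of the identity matrix.
\<close>

section \<open>The Clifford algebra on blades\<close>

abbreviation symdiff :: "'a set \<Rightarrow> 'a set \<Rightarrow> 'a set" where
  "symdiff A B \<equiv> (A - B) \<union> (B - A)"

lemma symdiff_symdiff [simp]: "symdiff A (symdiff A B) = B"
  by blast

lemma prod_symdiff_involution:
  fixes f :: "'a \<Rightarrow> 'b::comm_monoid_mult"
  assumes "finite A" "finite B" "\<And>x. f x * f x = 1"
  shows "prod f (symdiff A B) = prod f A * prod f B"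
proof -
  have d: "prod f (symdiff A B) = prod f (A - B) * prod f (B - A)"
    using assms by (subst prod.union_disjoint) auto
  have a: "prod f A = prod f (A \<inter> B) * prod f (A - B)"
    using assms(1) by (rule prod.Int_Diff)
  have b: "prod f B = prod f (A \<inter> B) * prod f (B - A)"
    using prod.Int_Diff[OF assms(2), of f A] by (simp add: Int_commute)
  have c: "prod f (A \<inter> B) * prod f (A \<inter> B) = 1"
    by (simp add: prod.distrib[symmetric] assms(3))
  have "prod f A * prod f B = (prod f (A \<inter> B) * prod f (A \<inter> B)) * (prod f (A - B) * prod f (B - A))"
    unfolding a b by (simp only: mult_ac)
  then show ?thesis
    unfolding d c by simp
qed

definition inversion_sign :: "nat set \<Rightarrow> nat set \<Rightarrow> real" where
  "inversion_sign A B = (\<Prod>a\<in>A. \<Prod>b\<in>B. if b < a then -1 else 1)"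

lemma neg_one_power_card_inversions:
  assumes "finite A" "finite B"
  shows "(-1::real) ^ card {(a, b). a \<in> A \<and> b \<in> B \<and> b < a} = inversion_sign A B"
proof -
  have "{(a, b). a \<in> A \<and> b \<in> B \<and> b < a} = Sigma A (\<lambda>a. {b \<in> B. b < a})"
    by auto
  then have "card {(a, b). a \<in> A \<and> b \<in> B \<and> b < a} = (\<Sum>a\<in>A. card {b \<in> B. b < a})"
    using assms by (simp add: card_SigmaI)
  then show ?thesis
    using assms by (simp add: inversion_sign_def power_sum prod.If_cases Int_def)
qed

lemma inversion_sign_symdiff_left:
  assumes "finite A" "finite B"
  shows "inversion_sign (symdiff A B) C = inversion_sign A C * inversion_sign B C"
proof -
  have "(\<Prod>b\<in>C. if b < x then -1 else 1) * (\<Prod>b\<in>C. if b < x then -1 else 1) = (1::real)" for x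
    unfolding prod.distrib[symmetric] by (rule prod.neutral) simp
  then show ?thesis
    unfolding inversion_sign_def by (rule prod_symdiff_involution[OF assms])
qed

lemma inversion_sign_symdiff_right:
  assumes "finite B" "finite C"
  shows "inversion_sign A (symdiff B C) = inversion_sign A B * inversion_sign A C"
  unfolding inversion_sign_def prod.distrib[symmetric]
  by (rule prod.cong[OF refl], rule prod_symdiff_involution) (use assms in simp_all)

lemma blade_sign_eq:
  "finite A \<Longrightarrow> finite B \<Longrightarrow> blade_sign p A B = inversion_sign A B * (\<Prod>i\<in>A \<inter> B. cl_sq p i)"
  unfolding blade_sign_def by (simp add: neg_one_power_card_inversions)

lemma cl_sq_square: "cl_sq p i * cl_sq p i = 1"
  by (simp add: cl_sq_def)

lemma cl_sq_cases: "cl_sq p k = 1 \<or> cl_sq p k = -1"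
  by (simp add: cl_sq_def)

lemma blade_sign_cocycle:
  assumes "finite A" "finite B" "finite C"
  shows "blade_sign p A B * blade_sign p (symdiff A B) C
       = blade_sign p B C * blade_sign p A (symdiff B C)"
proof -
  define Q where "Q X = (\<Prod>i\<in>X. cl_sq p i)" for X
  have Q: "Q X * Q Y = Q (symdiff X Y)" if "finite X" "finite Y" for X Y
    using prod_symdiff_involution[OF that cl_sq_square] unfolding Q_def by simp
  have fin: "finite (symdiff A B)" "finite (symdiff B C)"
    using assms by auto
  have "symdiff (A \<inter> B) (symdiff A B \<inter> C) = symdiff (B \<inter> C) (A \<inter> symdiff B C)"
    by blast
  then have q: "Q (A \<inter> B) * Q (symdiff A B \<inter> C) = Q (B \<inter> C) * Q (A \<inter> symdiff B C)"
    using assms by (simp add: Q)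
  have "blade_sign p A B * blade_sign p (symdiff A B) C
     = (inversion_sign A B * inversion_sign (symdiff A B) C) * (Q (A \<inter> B) * Q (symdiff A B \<inter> C))"
    using assms fin by (simp add: blade_sign_eq Q_def)
  also have "\<dots> = (inversion_sign B C * inversion_sign A (symdiff B C)) * (Q (B \<inter> C) * Q (A \<inter> symdiff B C))"
    unfolding q inversion_sign_symdiff_left[OF assms(1,2)] inversion_sign_symdiff_right[OF assms(2,3)]
    by (simp only: mult_ac)
  also have "\<dots> = blade_sign p B C * blade_sign p A (symdiff B C)"
    using assms fin by (simp add: blade_sign_eq Q_def)
  finally show ?thesis .
qed

lemma clmul_eq_sum:
  assumes "C \<in> Pow {..<p+q}"
  shows "clmul p q x y C = (\<Sum>A\<in>Pow {..<p+q}. blade_sign p A (symdiff A C) * x A * y (symdiff A C))"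
  unfolding clmul_def
proof (rule sum.cong[OF refl])
  fix A assume A: "A \<in> Pow {..<p+q}"
  have eq: "(symdiff A B = C) = (B = symdiff A C)" for B
    by blast
  have "symdiff A C \<in> Pow {..<p+q}"
    using A assms by auto
  then show "(\<Sum>B\<in>Pow {..<p+q}. if symdiff A B = C then blade_sign p A B * x A * y B else 0) =
        blade_sign p A (symdiff A C) * x A * y (symdiff A C)"
    unfolding eq by (simp add: sum.delta')
qed

lemma clmul_outside: "C \<notin> Pow {..<p+q} \<Longrightarrow> clmul p q x y C = 0"
  unfolding clmul_def by (auto intro!: sum.neutral)

lemma sum_Pow_reindex_symdiff:
  assumes "A \<in> Pow X"
  shows "(\<Sum>C\<in>Pow X. g C) = (\<Sum>B\<in>Pow X. g (symdiff A B))"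
  by (rule sum.reindex_bij_witness[where i="symdiff A" and j="symdiff A"]) (use assms in auto)

lemma clmul_assoc: "clmul p q (clmul p q x y) z = clmul p q x (clmul p q y z)"
proof
  fix D
  let ?U = "Pow {..<p+q}"
  show "clmul p q (clmul p q x y) z D = clmul p q x (clmul p q y z) D"
  proof (cases "D \<in> ?U")
    case False
    then show ?thesis by (simp add: clmul_outside)
  next
    case D: True
    have fin: "finite X" if "X \<in> ?U" for X
      using that finite_subset by auto
    have "clmul p q (clmul p q x y) z D
       = (\<Sum>C\<in>?U. \<Sum>A\<in>?U. blade_sign p C (symdiff C D) * (blade_sign p A (symdiff A C) * x A * y (symdiff A C)) * z (symdiff C D))"
      unfolding clmul_eq_sum[OF D]
      by (intro sum.cong refl) (simp add: clmul_eq_sum sum_distrib_left sum_distrib_right)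
    also have "\<dots> = (\<Sum>A\<in>?U. \<Sum>B\<in>?U. blade_sign p (symdiff A B) (symdiff (symdiff A B) D) * (blade_sign p A B * x A * y B) * z (symdiff (symdiff A B) D))"
      by (subst sum.swap)
        (rule sum.cong[OF refl], rule sum_Pow_reindex_symdiff[THEN trans], assumption, simp)
    also have "\<dots> = (\<Sum>A\<in>?U. \<Sum>B\<in>?U. blade_sign p A (symdiff A D) * x A * (blade_sign p B (symdiff B (symdiff A D)) * y B * z (symdiff B (symdiff A D))))"
    proof (intro sum.cong refl)
      fix A B assume A: "A \<in> ?U" and B: "B \<in> ?U"
      have e: "symdiff (symdiff A B) D = symdiff B (symdiff A D)"
        by blast
      have "blade_sign p A B * blade_sign p (symdiff A B) (symdiff B (symdiff A D))
          = blade_sign p B (symdiff B (symdiff A D)) * blade_sign p A (symdiff A D)"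
        using blade_sign_cocycle[OF fin[OF A] fin[OF B], of "symdiff B (symdiff A D)" p] fin A B D by auto
      then show "blade_sign p (symdiff A B) (symdiff (symdiff A B) D) * (blade_sign p A B * x A * y B) * z (symdiff (symdiff A B) D)
         = blade_sign p A (symdiff A D) * x A * (blade_sign p B (symdiff B (symdiff A D)) * y B * z (symdiff B (symdiff A D)))"
        unfolding e by (simp add: mult_ac)
    qed
    also have "\<dots> = clmul p q x (clmul p q y z) D"
      unfolding clmul_eq_sum[OF D]
      by (intro sum.cong refl) (subst clmul_eq_sum; use D in \<open>auto simp: sum_distrib_left\<close>)
    finally show ?thesis .
  qed
qed

definition cl_scale :: "real \<Rightarrow> cl \<Rightarrow> cl" where
  "cl_scale c x = (\<lambda>A. c * x A)"

definition cl_add :: "cl \<Rightarrow> cl \<Rightarrow> cl" where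
  "cl_add x y = (\<lambda>A. x A + y A)"

definition blade :: "nat set \<Rightarrow> cl" where
  "blade A = (\<lambda>B. if B = A then 1 else 0)"

text \<open>\<open>graded p q x k\<close>: \<open>x\<close> lies in \<open>Cl\<^sup>k(V)\<close>, the grade \<open>k\<close> being taken modulo 2.\<close>

definition graded :: "nat \<Rightarrow> nat \<Rightarrow> cl \<Rightarrow> nat \<Rightarrow> bool" where
  "graded p q x k \<longleftrightarrow> (\<forall>A. x A \<noteq> 0 \<longrightarrow> A \<subseteq> {..<p+q} \<and> even (card A + k))"

lemma clmul_scale_left: "clmul p q (cl_scale c x) y = cl_scale c (clmul p q x y)"
  unfolding clmul_def cl_scale_def by (simp add: sum_distrib_left mult_ac if_distrib cong: if_cong)

lemma clmul_scale_right: "clmul p q x (cl_scale c y) = cl_scale c (clmul p q x y)"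
  unfolding clmul_def cl_scale_def by (simp add: sum_distrib_left mult_ac if_distrib cong: if_cong)

lemma cl_scale_scale [simp]: "cl_scale a (cl_scale b x) = cl_scale (a * b) x"
  unfolding cl_scale_def by (simp add: mult_ac)

lemma cl_scale_one [simp]: "cl_scale 1 x = x"
  unfolding cl_scale_def by simp

lemma clmul_sum_right:
  assumes "finite I"
  shows "clmul p q x (\<lambda>A. \<Sum>i\<in>I. f i A) = (\<lambda>C. \<Sum>i\<in>I. clmul p q x (f i) C)"
proof
  fix C
  let ?U = "Pow {..<p+q}"
  have "clmul p q x (\<lambda>A. \<Sum>i\<in>I. f i A) C
      = (\<Sum>A\<in>?U. \<Sum>B\<in>?U. \<Sum>i\<in>I. if symdiff A B = C then blade_sign p A B * x A * f i B else 0)"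
    unfolding clmul_def by (intro sum.cong refl) (simp add: sum_distrib_left)
  also have "\<dots> = (\<Sum>i\<in>I. \<Sum>A\<in>?U. \<Sum>B\<in>?U. if symdiff A B = C then blade_sign p A B * x A * f i B else 0)"
    by (subst sum.swap, intro sum.cong refl, rule sum.swap)
  finally show "clmul p q x (\<lambda>A. \<Sum>i\<in>I. f i A) C = (\<Sum>i\<in>I. clmul p q x (f i) C)"
    unfolding clmul_def .
qed

lemma clmul_sum_left:
  assumes "finite I"
  shows "clmul p q (\<lambda>A. \<Sum>i\<in>I. f i A) y = (\<lambda>C. \<Sum>i\<in>I. clmul p q (f i) y C)"
proof
  fix C
  let ?U = "Pow {..<p+q}"
  have "clmul p q (\<lambda>A. \<Sum>i\<in>I. f i A) y C
      = (\<Sum>A\<in>?U. \<Sum>B\<in>?U. \<Sum>i\<in>I. if symdiff A B = C then blade_sign p A B * f i A * y B else 0)"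
    unfolding clmul_def by (intro sum.cong refl) (simp add: sum_distrib_left sum_distrib_right)
  also have "\<dots> = (\<Sum>i\<in>I. \<Sum>A\<in>?U. \<Sum>B\<in>?U. if symdiff A B = C then blade_sign p A B * f i A * y B else 0)"
    by (subst sum.swap, intro sum.cong refl, rule sum.swap)
  finally show "clmul p q (\<lambda>A. \<Sum>i\<in>I. f i A) y C = (\<Sum>i\<in>I. clmul p q (f i) y C)"
    unfolding clmul_def .
qed

lemma clmul_zero_left: "clmul p q (\<lambda>A. 0) y = (\<lambda>A. 0)"
  by (rule ext) (auto simp: clmul_def intro!: sum.neutral)

lemma card_symdiff:
  assumes "finite A" "finite C"
  shows "card (symdiff A C) + 2 * card (A \<inter> C) = card A + card C"
proof -
  have "symdiff A C = (A \<union> C) - (A \<inter> C)"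
    by blast
  moreover have "card ((A \<union> C) - (A \<inter> C)) = card (A \<union> C) - card (A \<inter> C)"
    using assms by (intro card_Diff_subset) auto
  ultimately have "card (symdiff A C) = card (A \<union> C) - card (A \<inter> C)"
    by simp
  moreover have "card (A \<inter> C) \<le> card (A \<union> C)"
    using assms by (intro card_mono) auto
  ultimately show ?thesis
    using card_Un_Int[OF assms] by simp
qed

lemma graded_clmul:
  assumes "graded p q x a" "graded p q y b"
  shows "graded p q (clmul p q x y) (a + b)"
  unfolding graded_def
proof (intro allI impI)
  fix C assume nz: "clmul p q x y C \<noteq> 0"
  then have C: "C \<in> Pow {..<p+q}"
    using clmul_outside by blast
  have "(\<Sum>A\<in>Pow {..<p+q}. blade_sign p A (symdiff A C) * x A * y (symdiff A C)) \<noteq> 0"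
    using nz unfolding clmul_eq_sum[OF C] .
  then obtain A where A: "A \<in> Pow {..<p+q}" "blade_sign p A (symdiff A C) * x A * y (symdiff A C) \<noteq> 0"
    by (rule sum.not_neutral_contains_not_neutral)
  then have "even (card A + a)" "even (card (symdiff A C) + b)"
    using assms unfolding graded_def by auto
  moreover have "card (symdiff A C) + 2 * card (A \<inter> C) = card A + card C"
    using A C finite_subset by (intro card_symdiff) auto
  ultimately have "even (card C + (a + b))"
    by presburger
  then show "C \<subseteq> {..<p+q} \<and> even (card C + (a + b))"
    using C by auto
qed

lemma graded_mod2: "graded p q x a \<Longrightarrow> a mod 2 = b mod 2 \<Longrightarrow> graded p q x b"
  unfolding graded_def by (metis even_add even_iff_mod_2_eq_zero)

lemma cl_even_iff_graded: "x \<in> cl_even p q \<longleftrightarrow> graded p q x 0"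
  unfolding cl_even_def graded_def by auto

lemma graded_scale: "graded p q x a \<Longrightarrow> graded p q (cl_scale c x) a"
  unfolding graded_def cl_scale_def by auto

lemma graded_add: "graded p q x a \<Longrightarrow> graded p q y a \<Longrightarrow> graded p q (cl_add x y) a"
  unfolding graded_def cl_add_def by (metis add.left_neutral add.right_neutral)

lemma graded_zero: "graded p q (\<lambda>A. 0) a"
  unfolding graded_def by auto

lemma graded_one: "graded p q cl_one 0"
  unfolding graded_def cl_one_def by auto

lemma graded_clvec: "graded p q (clvec p q v) 1"
  unfolding graded_def clvec_def by auto

lemma graded_blade: "A \<subseteq> {..<p+q} \<Longrightarrow> even (card A + a) \<Longrightarrow> graded p q (blade A) a"
  unfolding graded_def blade_def by auto

lemma graded_sum:
  "finite I \<Longrightarrow> (\<And>i. i \<in> I \<Longrightarrow> graded p q (f i) a) \<Longrightarrow> graded p q (\<lambda>A. \<Sum>i\<in>I. f i A) a"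
proof (induction I rule: finite_induct)
  case empty
  then show ?case by (simp add: graded_zero)
next
  case (insert x F)
  have "(\<lambda>A. \<Sum>i\<in>insert x F. f i A) = cl_add (f x) (\<lambda>A. \<Sum>i\<in>F. f i A)"
    using insert by (simp add: cl_add_def)
  then show ?case
    using insert by (simp add: graded_add)
qed

lemma graded_clprod: "graded p q (clprod p q vs) (length vs)"
proof (induction vs)
  case Nil
  then show ?case by (simp add: clprod_def graded_one)
next
  case (Cons v vs)
  have "clprod p q (v # vs) = clmul p q (clvec p q v) (clprod p q vs)"
    by (simp add: clprod_def)
  then show ?case
    using graded_clmul[OF graded_clvec Cons.IH] by simp
qed

lemma graded_0_1_zero: "graded p q x 0 \<Longrightarrow> graded p q x 1 \<Longrightarrow> x = (\<lambda>A. 0)"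
  unfolding graded_def by fastforce

lemma clmul_one_left:
  assumes "graded p q x a"
  shows "clmul p q cl_one x = x"
proof
  fix C
  show "clmul p q cl_one x C = x C"
  proof (cases "C \<in> Pow {..<p+q}")
    case True
    have "clmul p q cl_one x C = (\<Sum>A\<in>Pow {..<p+q}. if A = {} then x C else 0)"
      unfolding clmul_eq_sum[OF True] by (rule sum.cong) (auto simp: cl_one_def blade_sign_def)
    then show ?thesis
      by (simp add: sum.delta)
  next
    case False
    then show ?thesis
      using clmul_outside assms unfolding graded_def by (metis PowI)
  qed
qed

lemma clmul_one_right:
  assumes "graded p q x a"
  shows "clmul p q x cl_one = x"
proof
  fix C
  show "clmul p q x cl_one C = x C"
  proof (cases "C \<in> Pow {..<p+q}")
    case True
    have "clmul p q x cl_one C = (\<Sum>A\<in>Pow {..<p+q}. if A = C then x C else 0)"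
      unfolding clmul_eq_sum[OF True] by (rule sum.cong) (auto simp: cl_one_def blade_sign_def)
    then show ?thesis
      using True by (simp add: sum.delta)
  next
    case False
    then show ?thesis
      using clmul_outside assms unfolding graded_def by (metis PowI)
  qed
qed

lemma clmul_blade:
  assumes "A \<in> Pow {..<p+q}" "B \<in> Pow {..<p+q}"
  shows "clmul p q (blade A) (blade B) = cl_scale (blade_sign p A B) (blade (symdiff A B))"
proof
  fix C
  show "clmul p q (blade A) (blade B) C = cl_scale (blade_sign p A B) (blade (symdiff A B)) C"
  proof (cases "C \<in> Pow {..<p+q}")
    case True
    have "clmul p q (blade A) (blade B) C
        = (\<Sum>A'\<in>Pow {..<p+q}. if A' = A then blade_sign p A (symdiff A C) * blade B (symdiff A C) else 0)"
      unfolding clmul_eq_sum[OF True] by (rule sum.cong) (auto simp: blade_def)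
    also have "\<dots> = blade_sign p A (symdiff A C) * blade B (symdiff A C)"
      using assms by simp
    finally have "clmul p q (blade A) (blade B) C = blade_sign p A (symdiff A C) * blade B (symdiff A C)" .
    moreover have "(symdiff A C = B) = (C = symdiff A B)"
      by blast
    ultimately show ?thesis
      unfolding blade_def cl_scale_def by auto
  next
    case False
    then have "symdiff A B \<noteq> C"
      using assms by auto
    then show ?thesis
      using False by (simp add: clmul_outside blade_def cl_scale_def)
  qed
qed

lemma blade_empty: "blade {} = cl_one"
  unfolding blade_def cl_one_def by auto

lemma clvec_std_basis: "k < p+q \<Longrightarrow> clvec p q (std_basis k) = blade {k}"
  unfolding clvec_def blade_def std_basis_def by (rule ext) auto

lemma clvec_eq_sum_blades: "clvec p q v = (\<lambda>A. \<Sum>i<p+q. v i * blade {i} A)"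
proof
  fix A
  show "clvec p q v A = (\<Sum>i<p+q. v i * blade {i} A)"
  proof (cases "\<exists>i<p+q. A = {i}")
    case True
    then obtain i where i: "i < p+q" "A = {i}"
      by blast
    have "(\<Sum>j<p+q. v j * blade {j} A) = (\<Sum>j<p+q. if j = i then v i else 0)"
      by (rule sum.cong) (auto simp: blade_def i)
    then show ?thesis
      using i by (simp add: clvec_def)
  next
    case False
    then show ?thesis
      by (auto simp: clvec_def blade_def)
  qed
qed

lemma blade_sign_singletons:
  "blade_sign p {i} {j} = (if i = j then cl_sq p i else if j < i then -1 else 1)"
proof -
  have "{(a, b). a \<in> {i} \<and> b \<in> {j} \<and> b < a} = (if j < i then {(i, j)} else {})"
    by auto
  then show ?thesis
    unfolding blade_sign_def by auto
qed

lemma blade_singleton_anticomm: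
  assumes "i < p+q" "j < p+q"
  shows "(\<lambda>C. clmul p q (blade {i}) (blade {j}) C + clmul p q (blade {j}) (blade {i}) C)
        = (\<lambda>C. if i = j then 2 * cl_sq p i * cl_one C else 0)"
proof -
  have "clmul p q (blade {i}) (blade {j}) = cl_scale (blade_sign p {i} {j}) (blade (symdiff {i} {j}))"
    "clmul p q (blade {j}) (blade {i}) = cl_scale (blade_sign p {j} {i}) (blade (symdiff {j} {i}))"
    using assms by (auto intro: clmul_blade)
  moreover have "symdiff {j} {i} = symdiff {i} {j}"
    by blast
  moreover have "i = j \<Longrightarrow> symdiff {i} {j} = {}"
    by auto
  ultimately show ?thesis
    by (auto simp: blade_sign_singletons cl_scale_def blade_empty)
qed

lemma ip_eq_sum_cl_sq: "ip p q v w = - (\<Sum>i<p+q. cl_sq p i * v i * w i)"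
proof -
  have "(\<Sum>i<p+q. cl_sq p i * v i * w i)
      = (\<Sum>i<p. cl_sq p i * v i * w i) + (\<Sum>i\<in>{p..<p+q}. cl_sq p i * v i * w i)"
    by (metis (no_types, lifting) add_0 le_add1 lessThan_atLeast0 sum.atLeastLessThan_concat)
  also have "\<dots> = - (\<Sum>i<p. v i * w i) + (\<Sum>i\<in>{p..<p+q}. v i * w i)"
    by (simp add: cl_sq_def sum_negf)
  finally show ?thesis
    unfolding ip_def by simp
qed

lemma ip_std_basis:
  assumes "k < p+q"
  shows "ip p q (std_basis k) z = - cl_sq p k * z k"
proof -
  have "(\<Sum>i<p+q. cl_sq p i * std_basis k i * z i) = (\<Sum>i<p+q. if i = k then cl_sq p k * z k else 0)"
    by (rule sum.cong) (auto simp: std_basis_def)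
  then show ?thesis
    unfolding ip_eq_sum_cl_sq using assms by simp
qed

lemma clmul_clvec_eq_sum:
  "clmul p q (clvec p q v) (clvec p q w)
     = (\<lambda>C. \<Sum>i<p+q. \<Sum>j<p+q. v i * w j * clmul p q (blade {i}) (blade {j}) C)"
proof -
  have "clmul p q (\<lambda>A. v i * blade {i} A) (\<lambda>A. w j * blade {j} A) C
      = v i * w j * clmul p q (blade {i}) (blade {j}) C" for i j C
    using clmul_scale_left[of p q "v i" "blade {i}"] clmul_scale_right[of p q "blade {i}" "w j" "blade {j}"]
    unfolding cl_scale_def by simp
  then show ?thesis
    unfolding clvec_eq_sum_blades clmul_sum_left[OF finite_lessThan] clmul_sum_right[OF finite_lessThan]
    by simp
qed

lemma clvec_anticomm:
  "(\<lambda>C. clmul p q (clvec p q v) (clvec p q w) C + clmul p q (clvec p q w) (clvec p q v) C)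
   = cl_scale (-2 * ip p q v w) cl_one"
proof
  fix C
  let ?I = "{..<p+q}"
  have "clmul p q (clvec p q v) (clvec p q w) C + clmul p q (clvec p q w) (clvec p q v) C
      = (\<Sum>i\<in>?I. \<Sum>j\<in>?I. v i * w j * (clmul p q (blade {i}) (blade {j}) C + clmul p q (blade {j}) (blade {i}) C))"
  proof -
    have "clmul p q (clvec p q w) (clvec p q v) C
        = (\<Sum>i\<in>?I. \<Sum>j\<in>?I. v i * w j * clmul p q (blade {j}) (blade {i}) C)"
      unfolding clmul_clvec_eq_sum by (subst sum.swap) (simp add: mult_ac)
    then show ?thesis
      unfolding clmul_clvec_eq_sum by (simp add: sum.distrib[symmetric] distrib_left)
  qed
  also have "\<dots> = (\<Sum>i\<in>?I. \<Sum>j\<in>?I. if j = i then v i * w i * (2 * cl_sq p i * cl_one C) else 0)"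
  proof (intro sum.cong refl)
    fix i j assume "i \<in> ?I" "j \<in> ?I"
    then show "v i * w j * (clmul p q (blade {i}) (blade {j}) C + clmul p q (blade {j}) (blade {i}) C)
        = (if j = i then v i * w i * (2 * cl_sq p i * cl_one C) else 0)"
      using fun_cong[OF blade_singleton_anticomm[of i p q j], of C] by auto
  qed
  also have "\<dots> = cl_scale (-2 * ip p q v w) cl_one C"
    unfolding ip_eq_sum_cl_sq cl_scale_def
    by (simp add: sum_distrib_left sum_distrib_right mult_ac sum_negf)
  finally show "clmul p q (clvec p q v) (clvec p q w) C + clmul p q (clvec p q w) (clvec p q v) C
      = cl_scale (-2 * ip p q v w) cl_one C" .
qed

lemma clvec_square: "clmul p q (clvec p q v) (clvec p q v) = cl_scale (- ip p q v v) cl_one"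
proof
  fix C
  have "clmul p q (clvec p q v) (clvec p q v) C + clmul p q (clvec p q v) (clvec p q v) C
      = cl_scale (-2 * ip p q v v) cl_one C"
    using fun_cong[OF clvec_anticomm[of p q v v], of C] by (simp only:)
  then show "clmul p q (clvec p q v) (clvec p q v) C = cl_scale (- ip p q v v) cl_one C"
    unfolding cl_scale_def by linarith
qed

lemma clprod_Cons: "clprod p q (x # xs) = clmul p q (clvec p q x) (clprod p q xs)"
  unfolding clprod_def by simp

lemma clprod_append: "clprod p q (xs @ ys) = clmul p q (clprod p q xs) (clprod p q ys)"
proof (induction xs)
  case Nil
  then show ?case
    using clmul_one_left[OF graded_clprod[of p q ys]] by (simp add: clprod_def)
next
  case (Cons x xs)
  then show ?case
    by (simp add: clprod_Cons clmul_assoc)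
qed

lemma clprod_single: "clprod p q [x] = clvec p q x"
  using clmul_one_right[OF graded_clvec[of p q x]] by (simp add: clprod_def)

lemma clprod_mul_rev:
  "clmul p q (clprod p q xs) (clprod p q (rev xs)) = cl_scale (\<Prod>x\<leftarrow>xs. - ip p q x x) cl_one"
proof (induction xs)
  case Nil
  then show ?case
    using clmul_one_left[OF graded_one] by (simp add: clprod_def)
next
  case (Cons x xs)
  have "clmul p q (clprod p q (x # xs)) (clprod p q (rev (x # xs)))
      = clmul p q (clvec p q x) (clmul p q (clmul p q (clprod p q xs) (clprod p q (rev xs))) (clvec p q x))"
    unfolding rev.simps clprod_append clprod_single unfolding clprod_Cons clmul_assoc ..
  also have "\<dots> = cl_scale (\<Prod>x\<leftarrow>xs. - ip p q x x) (clmul p q (clvec p q x) (clvec p q x))"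
    using Cons by (simp add: clmul_scale_left clmul_scale_right clmul_one_left[OF graded_clvec])
  also have "\<dots> = cl_scale (\<Prod>x\<leftarrow>x # xs. - ip p q x x) cl_one"
    unfolding clvec_square by (simp add: mult.commute)
  finally show ?case .
qed

lemma prod_list_unit_cases:
  "\<forall>x\<in>set xs. f x = 1 \<or> f x = -1 \<Longrightarrow> (\<Prod>x\<leftarrow>xs. f x) = 1 \<or> (\<Prod>x\<leftarrow>xs. f x) = (-1::real)"
  by (induction xs) auto

lemma spin_grpE:
  assumes "g \<in> spin_grp p q S"
  obtains xs where "g = clprod p q xs" "\<forall>x\<in>set xs. x \<in> S \<and> (ip p q x x = 1 \<or> ip p q x x = -1)"
    "even (length xs)"
proof -
  obtain xs where g: "g = clprod p q xs"
    and xs: "\<forall>x\<in>set xs. x \<in> S \<and> (ip p q x x = 1 \<or> ip p q x x = -1)"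
    using assms unfolding spin_grp_def pin_grp_def by blast
  have g_even: "graded p q g 0"
    using assms cl_even_iff_graded unfolding spin_grp_def by blast
  have "\<forall>x\<in>set xs. - ip p q x x = 1 \<or> - ip p q x x = -1"
    using xs by auto
  then have norm: "(\<Prod>x\<leftarrow>xs. - ip p q x x) = 1 \<or> (\<Prod>x\<leftarrow>xs. - ip p q x x) = -1"
    by (rule prod_list_unit_cases)
  have "even (length xs)"
  proof (rule ccontr)
    assume "odd (length xs)"
    then have "graded p q g 1"
      unfolding g by (intro graded_mod2[OF graded_clprod]) (simp add: odd_iff_mod_2_eq_one)
    then have "g = (\<lambda>A. 0)"
      using graded_0_1_zero g_even by blast
    then have "cl_scale (\<Prod>x\<leftarrow>xs. - ip p q x x) cl_one = (\<lambda>A. 0)"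
      using clprod_mul_rev[of p q xs] unfolding g by (simp add: clmul_zero_left)
    then have "(\<Prod>x\<leftarrow>xs. - ip p q x x) = 0"
      using fun_cong[of _ _ "{}"] unfolding cl_scale_def cl_one_def by fastforce
    then show False
      using norm by simp
  qed
  then show ?thesis
    using that g xs by blast
qed

abbreviation eb :: "nat \<Rightarrow> cl" where
  "eb k \<equiv> blade {k}"

lemma triangle_Suc: "Suc m * m div 2 = m * (m - 1) div 2 + m"
  by (cases m) (simp_all add: algebra_simps)

locale clifford =
  fixes p q :: nat
begin

abbreviation n :: nat where
  "n \<equiv> p + q"

abbreviation clmul_infix :: "cl \<Rightarrow> cl \<Rightarrow> cl" (infixl "\<cdot>" 70) where
  "x \<cdot> y \<equiv> clmul p q x y"

abbreviation even_cl :: "cl \<Rightarrow> bool" where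
  "even_cl x \<equiv> graded p q x 0"

definition eprod :: "nat list \<Rightarrow> cl" where
  "eprod L = clprod p q (map std_basis L)"

lemma graded_eb: "k < n \<Longrightarrow> graded p q (eb k) 1"
  by (rule graded_blade) auto

lemma even_eb_eb: "k < n \<Longrightarrow> l < n \<Longrightarrow> even_cl (eb k \<cdot> eb l)"
  using graded_clmul[OF graded_eb graded_eb, of k l] graded_mod2 by fastforce

lemma eb_anticomm: "k < n \<Longrightarrow> l < n \<Longrightarrow> k \<noteq> l \<Longrightarrow> eb l \<cdot> eb k = cl_scale (-1) (eb k \<cdot> eb l)"
  using blade_singleton_anticomm[of k p q l] unfolding cl_scale_def fun_eq_iff by (simp add: eq_neg_iff_add_eq_0 add.commute)

lemma eb_square: "k < n \<Longrightarrow> eb k \<cdot> eb k = cl_scale (cl_sq p k) cl_one"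
  using blade_singleton_anticomm[of k p q k] unfolding cl_scale_def fun_eq_iff by simp

lemma eb_eb_square:
  assumes "k < n" "l < n" "k \<noteq> l"
  shows "(eb k \<cdot> eb l) \<cdot> (eb k \<cdot> eb l) = cl_scale (- (cl_sq p k * cl_sq p l)) cl_one"
proof -
  have "(eb k \<cdot> eb l) \<cdot> (eb k \<cdot> eb l) = eb k \<cdot> ((eb l \<cdot> eb k) \<cdot> eb l)"
    by (simp add: clmul_assoc)
  also have "\<dots> = cl_scale (-1) ((eb k \<cdot> eb k) \<cdot> (eb l \<cdot> eb l))"
    unfolding eb_anticomm[OF assms] clmul_scale_left clmul_scale_right by (simp add: clmul_assoc)
  also have "\<dots> = cl_scale (- (cl_sq p k * cl_sq p l)) cl_one"
    unfolding eb_square[OF assms(1)] eb_square[OF assms(2)] clmul_scale_left clmul_scale_right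
      clmul_one_left[OF graded_one]
    by (simp add: mult.commute)
  finally show ?thesis .
qed

lemma eb_eb_mul_swap:
  assumes "k < n" "l < n"
  shows "(eb k \<cdot> eb l) \<cdot> (eb l \<cdot> eb k) = cl_scale (cl_sq p k * cl_sq p l) cl_one"
proof -
  have "(eb k \<cdot> eb l) \<cdot> (eb l \<cdot> eb k) = eb k \<cdot> ((eb l \<cdot> eb l) \<cdot> eb k)"
    by (simp add: clmul_assoc)
  also have "\<dots> = cl_scale (cl_sq p l) (eb k \<cdot> eb k)"
    unfolding eb_square[OF assms(2)] clmul_scale_left clmul_scale_right clmul_one_left[OF graded_eb[OF assms(1)]] ..
  also have "\<dots> = cl_scale (cl_sq p k * cl_sq p l) cl_one"
    unfolding eb_square[OF assms(1)] by (simp add: mult.commute)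
  finally show ?thesis .
qed

lemma eprod_Nil: "eprod [] = cl_one"
  unfolding eprod_def clprod_def by simp

lemma eprod_Cons: "x < n \<Longrightarrow> eprod (x # L) = eb x \<cdot> eprod L"
  unfolding eprod_def clprod_def by (simp add: clvec_std_basis)

lemma graded_eprod: "graded p q (eprod L) (length L)"
  unfolding eprod_def using graded_clprod[of p q "map std_basis L"] by simp

lemma even_eprod: "even (length L) \<Longrightarrow> even_cl (eprod L)"
  using graded_eprod[of L] graded_mod2 by fastforce

lemma eprod_append: "set L1 \<subseteq> {..<n} \<Longrightarrow> eprod (L1 @ L2) = eprod L1 \<cdot> eprod L2"
proof (induction L1)
  case Nil
  then show ?case
    using clmul_one_left[OF graded_eprod] by (simp add: eprod_Nil)
next
  case (Cons x L1)
  then show ?case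
    by (simp add: eprod_Cons clmul_assoc)
qed

lemma eprod_single: "x < n \<Longrightarrow> eprod [x] = eb x"
  using clmul_one_right[OF graded_eb] by (simp add: eprod_Cons eprod_Nil)

lemma eb_eprod_commute:
  assumes "x < n" "set L \<subseteq> {..<n}" "distinct L"
  shows "eb x \<cdot> eprod L = cl_scale ((-1) ^ (length L + (if x \<in> set L then 1 else 0))) (eprod L \<cdot> eb x)"
  using assms(2,3)
proof (induction L)
  case Nil
  show ?case
    using clmul_one_left[OF graded_eb[OF assms(1)]] clmul_one_right[OF graded_eb[OF assms(1)]]
    by (simp add: eprod_Nil)
next
  case (Cons y L)
  then have y: "y < n" "y \<notin> set L" and L: "set L \<subseteq> {..<n}" "distinct L"
    by auto
  define s where "s = ((-1::real) ^ (length L + (if x \<in> set L then 1 else 0)))"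
  have ss: "s * s = 1"
    unfolding s_def by (simp add: power_add[symmetric] mult_2[symmetric] power_mult)
  have IH: "eb x \<cdot> eprod L = cl_scale s (eprod L \<cdot> eb x)"
    using Cons L unfolding s_def by blast
  show ?case
  proof (cases "x = y")
    case True
    have IH': "eprod L \<cdot> eb x = cl_scale s (eb x \<cdot> eprod L)"
      unfolding IH using ss by simp
    have "cl_scale s (eb x \<cdot> (eprod L \<cdot> eb x)) = eb x \<cdot> (eb x \<cdot> eprod L)"
      unfolding IH' clmul_scale_right cl_scale_scale ss by simp
    moreover have "s = (-1) ^ length L"
      using True y unfolding s_def by simp
    ultimately show ?thesis
      using True y by (simp add: eprod_Cons clmul_assoc)
  next
    case False
    have "eb x \<cdot> eprod (y # L) = (eb x \<cdot> eb y) \<cdot> eprod L"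
      using y by (simp add: eprod_Cons clmul_assoc)
    also have "\<dots> = cl_scale (-1) (eb y \<cdot> (eb x \<cdot> eprod L))"
      unfolding eb_anticomm[OF y(1) assms(1) False[symmetric]] clmul_scale_left clmul_assoc ..
    also have "\<dots> = cl_scale (-s) ((eb y \<cdot> eprod L) \<cdot> eb x)"
      unfolding IH clmul_scale_right clmul_assoc by simp
    also have "-s = (-1) ^ (length (y # L) + (if x \<in> set (y # L) then 1 else 0))"
      unfolding s_def using False by simp
    finally show ?thesis
      using y by (simp add: eprod_Cons)
  qed
qed

lemma eprod_rev:
  assumes "set L \<subseteq> {..<n}" "distinct L"
  shows "eprod (rev L) = cl_scale ((-1) ^ (length L * (length L - 1) div 2)) (eprod L)"
  using assms
proof (induction L)
  case Nil
  then show ?case by simp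
next
  case (Cons x L)
  then have x: "x < n" "x \<notin> set L" and L: "set L \<subseteq> {..<n}" "distinct L"
    by auto
  define m where "m = length L"
  have c: "eb x \<cdot> eprod L = cl_scale ((-1) ^ m) (eprod L \<cdot> eb x)"
    using eb_eprod_commute[OF x(1) L] x(2) unfolding m_def by simp
  have c2: "eprod L \<cdot> eb x = cl_scale ((-1) ^ m) (eb x \<cdot> eprod L)"
    unfolding c by (simp add: power_add[symmetric] mult_2[symmetric] power_mult)
  have "eprod (rev (x # L)) = eprod (rev L) \<cdot> eprod [x]"
    using L by (simp add: eprod_append)
  also have "\<dots> = cl_scale ((-1) ^ (m * (m - 1) div 2)) (eprod L \<cdot> eb x)"
    unfolding Cons.IH[OF L] eprod_single[OF x(1)] clmul_scale_left m_def ..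
  also have "\<dots> = cl_scale ((-1) ^ (m * (m - 1) div 2 + m)) (eprod (x # L))"
    unfolding c2 eprod_Cons[OF x(1)] by (simp add: power_add)
  also have "m * (m - 1) div 2 + m = length (x # L) * (length (x # L) - 1) div 2"
    unfolding m_def using triangle_Suc[of "length L"] by simp
  finally show ?case .
qed

end

section \<open>Equivariant pairings\<close>

definition elem_bivector :: "nat \<Rightarrow> nat \<Rightarrow> nat \<Rightarrow> nat \<Rightarrow> real" where
  "elem_bivector k l = (\<lambda>i j. if i = k \<and> j = l then 1 else 0)"

lemma sum_elem_bivector:
  assumes "k < N" "l < N"
  shows "(\<Sum>i<N. \<Sum>j<N. elem_bivector k l i j * f i j) = (f k l :: real)"
proof -
  have "(\<Sum>j<N. elem_bivector k l i j * f i j) = (if i = k then f k l else 0)" for i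
  proof -
    have "(\<Sum>j<N. elem_bivector k l i j * f i j) = (\<Sum>j<N. if i = k \<and> j = l then f k l else 0)"
      by (rule sum.cong) (auto simp: elem_bivector_def)
    then show ?thesis
      using assms(2) by (cases "i = k") simp_all
  qed
  then show ?thesis
    using assms(1) by simp
qed

locale cl0_pairing = clifford p q
  for p q :: nat
  and \<rho> :: "cl \<Rightarrow> 'w::real_vector \<Rightarrow> 'w"
  and Pr :: "'w \<Rightarrow> 'w \<Rightarrow> vec" +
  assumes module: "cl0_module p q \<rho>"
    and equiv: "equivariant_pairing p q \<rho> Pr"
begin

lemma linear_rho: "even_cl x \<Longrightarrow> linear (\<rho> x)"
  using module cl_even_iff_graded unfolding cl0_module_def by blast

lemma rho_lin_comb:
  "even_cl x \<Longrightarrow> even_cl y \<Longrightarrow> \<rho> (\<lambda>A. a * x A + y A) = (\<lambda>w. a *\<^sub>R \<rho> x w + \<rho> y w)"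
  using module cl_even_iff_graded unfolding cl0_module_def by blast

lemma rho_one: "\<rho> cl_one w = w"
  using module unfolding cl0_module_def by simp

lemma rho_mul:
  assumes "even_cl x" "even_cl y"
  shows "\<rho> (x \<cdot> y) w = \<rho> x (\<rho> y w)"
proof -
  have "\<rho> (x \<cdot> y) = \<rho> x \<circ> \<rho> y"
    using module assms cl_even_iff_graded unfolding cl0_module_def by blast
  then show ?thesis
    by simp
qed

lemma rho_add: "even_cl x \<Longrightarrow> even_cl y \<Longrightarrow> \<rho> (cl_add x y) w = \<rho> x w + \<rho> y w"
  using rho_lin_comb[of x y 1] unfolding cl_add_def by simp

lemma rho_zero: "\<rho> (\<lambda>A. 0) w = 0"
proof -
  have "\<rho> (\<lambda>A. 1 * 0 + 0) w = 1 *\<^sub>R \<rho> (\<lambda>A. 0) w + \<rho> (\<lambda>A. 0) w"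
    using rho_lin_comb[OF graded_zero graded_zero, of 1] by metis
  then show ?thesis
    by simp
qed

lemma rho_scale: "even_cl x \<Longrightarrow> \<rho> (cl_scale c x) w = c *\<^sub>R \<rho> x w"
  using rho_lin_comb[OF _ graded_zero, of x c] rho_zero unfolding cl_scale_def by simp

lemma rho_minus: "even_cl x \<Longrightarrow> \<rho> (cl_scale (-1) x) w = - \<rho> x w"
  using rho_scale[of x "-1" w] by simp

lemma rho_sum:
  "finite I \<Longrightarrow> (\<And>i. i \<in> I \<Longrightarrow> even_cl (f i)) \<Longrightarrow> \<rho> (\<lambda>A. \<Sum>i\<in>I. f i A) w = (\<Sum>i\<in>I. \<rho> (f i) w)"
proof (induction I rule: finite_induct)
  case empty
  then show ?case by (simp add: rho_zero)
next
  case (insert x F)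
  have "(\<lambda>A. \<Sum>i\<in>insert x F. f i A) = cl_add (f x) (\<lambda>A. \<Sum>i\<in>F. f i A)"
    using insert by (simp add: cl_add_def)
  moreover have "even_cl (\<lambda>A. \<Sum>i\<in>F. f i A)"
    using insert by (intro graded_sum) auto
  ultimately show ?case
    using insert by (simp add: rho_add)
qed

lemma rho_add_vec: "even_cl x \<Longrightarrow> \<rho> x (a + b) = \<rho> x a + \<rho> x b"
  using linear_rho linear_add by blast

lemma rho_scale_vec: "even_cl x \<Longrightarrow> \<rho> x (c *\<^sub>R a) = c *\<^sub>R \<rho> x a"
  using linear_rho linear_scale by blast

lemma linear_Pr_left: "linear (\<lambda>s. Pr s t k)"
  using equiv unfolding equivariant_pairing_def bilinear_def by blast

lemma linear_Pr_right: "linear (\<lambda>t. Pr s t k)"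
  using equiv unfolding equivariant_pairing_def bilinear_def by blast

lemma Pr_add_left: "Pr (a + b) t k = Pr a t k + Pr b t k"
  using linear_add[OF linear_Pr_left] by blast

lemma Pr_add_right: "Pr s (a + b) k = Pr s a k + Pr s b k"
  using linear_add[OF linear_Pr_right] by blast

lemma Pr_scale_left: "Pr (c *\<^sub>R a) t k = c * Pr a t k"
  using linear_scale[OF linear_Pr_left] by fastforce

lemma Pr_scale_right: "Pr s (c *\<^sub>R a) k = c * Pr s a k"
  using linear_scale[OF linear_Pr_right] by fastforce

lemma Pr_minus_left: "Pr (- a) t k = - Pr a t k"
  using Pr_scale_left[of "-1" a t k] by simp

lemma Pr_minus_right: "Pr s (- a) k = - Pr s a k"
  using Pr_scale_right[of s "-1" a k] by simp

lemma Pr_skew: "Pr s t k = - Pr t s k"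
  using equiv unfolding equivariant_pairing_def by blast

lemma Pr_sum_left: "finite I \<Longrightarrow> Pr (\<Sum>i\<in>I. f i) t k = (\<Sum>i\<in>I. Pr (f i) t k)"
  by (induction I rule: finite_induct) (simp_all add: Pr_add_left Pr_scale_left[of 0 0, simplified])

lemma spin_elt_elem_bivector:
  assumes "k < n" "l < n" "k \<noteq> l"
  shows "spin_elt p q (elem_bivector k l) = cl_scale (-1/2) (eb k \<cdot> eb l)"
proof
  fix A
  have "spin_elt p q (elem_bivector k l) A = - (1/4) * ((eb k \<cdot> eb l) A - (eb l \<cdot> eb k) A)"
    unfolding spin_elt_def
    using sum_elem_bivector[OF assms(1,2), where f = "\<lambda>i j. clmul p q (clvec p q (std_basis i)) (clvec p q (std_basis j)) A
       - clmul p q (clvec p q (std_basis j)) (clvec p q (std_basis i)) A"]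
    by (simp add: clvec_std_basis assms)
  then show "spin_elt p q (elem_bivector k l) A = cl_scale (-1/2) (eb k \<cdot> eb l) A"
    using eb_anticomm[OF assms] unfolding cl_scale_def by simp
qed

lemma so_act_V_elem_bivector:
  assumes "k < n" "l < n"
  shows "so_act_V p q (elem_bivector k l) z m
    = - cl_sq p l * z l * (if m = k then 1 else 0) + cl_sq p k * z k * (if m = l then 1 else 0)"
proof -
  have "so_act_V p q (elem_bivector k l) z m
      = ip p q (std_basis l) z * std_basis k m - ip p q (std_basis k) z * std_basis l m"
    unfolding so_act_V_def using assms by (rule sum_elem_bivector)
  then show ?thesis
    unfolding ip_std_basis[OF assms(1)] ip_std_basis[OF assms(2)] by (simp add: std_basis_def)
qed

text \<open>Equivariance for the bivector \<open>e\<^sub>k \<and> e\<^sub>l\<close>, which acts on \<open>W\<close> through \<open>-e\<^sub>k e\<^sub>l/2\<close>;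
  this identity is all that is used of the equivariance of \<open>\<Pi>\<close>.\<close>

lemma Pr_eb_eb_equivariance:
  assumes kl: "k < n" "l < n" "k \<noteq> l"
  shows "Pr (\<rho> (eb k \<cdot> eb l) s) t m + Pr s (\<rho> (eb k \<cdot> eb l) t) m =
     (if m = k then 2 * cl_sq p l * Pr s t l else 0) - (if m = l then 2 * cl_sq p k * Pr s t k else 0)"
proof -
  have Y: "even_cl (eb k \<cdot> eb l)"
    using kl by (intro even_eb_eb)
  have "so_act_V p q (elem_bivector k l) (Pr s t) m
      = Pr (\<rho> (spin_elt p q (elem_bivector k l)) s) t m + Pr s (\<rho> (spin_elt p q (elem_bivector k l)) t) m"
    using equiv unfolding equivariant_pairing_def by metis
  also have "\<dots> = - 1/2 * (Pr (\<rho> (eb k \<cdot> eb l) s) t m + Pr s (\<rho> (eb k \<cdot> eb l) t) m)"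
    unfolding spin_elt_elem_bivector[OF kl] rho_scale[OF Y] Pr_scale_left Pr_scale_right
    by (simp add: algebra_simps)
  finally show ?thesis
    unfolding so_act_V_elem_bivector[OF kl(1,2)] by (auto simp: algebra_simps)
qed

lemma rho_eb_eb_twice:
  assumes "k < n" "l < n" "k \<noteq> l"
  shows "\<rho> (eb k \<cdot> eb l) (\<rho> (eb k \<cdot> eb l) w) = (- (cl_sq p k * cl_sq p l)) *\<^sub>R w"
proof -
  have "\<rho> (eb k \<cdot> eb l) (\<rho> (eb k \<cdot> eb l) w) = \<rho> ((eb k \<cdot> eb l) \<cdot> (eb k \<cdot> eb l)) w"
    using rho_mul[OF even_eb_eb[OF assms(1,2)] even_eb_eb[OF assms(1,2)]] by simp
  then show ?thesis
    unfolding eb_eb_square[OF assms] rho_scale[OF graded_one] rho_one .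
qed

lemma rho_eb_eb_swap:
  assumes "k < n" "l < n" "k \<noteq> l" "even_cl a"
  shows "\<rho> (eb k \<cdot> eb l) (\<rho> a w) = - \<rho> (eb l \<cdot> eb k \<cdot> a) w"
proof -
  have "\<rho> (eb k \<cdot> eb l) (\<rho> a w) = \<rho> ((eb k \<cdot> eb l) \<cdot> a) w"
    using rho_mul[OF even_eb_eb[OF assms(1,2)] assms(4)] by simp
  also have "(eb k \<cdot> eb l) \<cdot> a = cl_scale (-1) (eb l \<cdot> eb k \<cdot> a)"
    unfolding eb_anticomm[OF assms(2,1) assms(3)[symmetric]] clmul_scale_left ..
  finally show ?thesis
    using graded_clmul[OF even_eb_eb[OF assms(2,1)] assms(4)] rho_minus by simp
qed

lemma rho_eb_eb_cancel:
  assumes "k < n" "l < n" "even_cl a"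
  shows "\<rho> (eb k \<cdot> eb l) (\<rho> (eb l \<cdot> eb k \<cdot> a) w) = (cl_sq p k * cl_sq p l) *\<^sub>R \<rho> a w"
proof -
  have "even_cl (eb l \<cdot> eb k \<cdot> a)"
    using graded_clmul[OF even_eb_eb assms(3)] assms by simp
  then have "\<rho> (eb k \<cdot> eb l) (\<rho> (eb l \<cdot> eb k \<cdot> a) w) = \<rho> (((eb k \<cdot> eb l) \<cdot> (eb l \<cdot> eb k)) \<cdot> a) w"
    using rho_mul[OF even_eb_eb, symmetric] assms by (simp add: clmul_assoc)
  also have "\<dots> = \<rho> (cl_scale (cl_sq p k * cl_sq p l) a) w"
    unfolding eb_eb_mul_swap[OF assms(1,2)] clmul_scale_left clmul_one_left[OF assms(3)] ..
  finally show ?thesis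
    using rho_scale[OF assms(3)] by simp
qed

text \<open>Eliminate the two cross terms between three instances of the equivariance identity.\<close>

lemma Pr_component_shift:
  assumes kl: "k < n" "l < n" "k \<noteq> l" and a: "even_cl a"
  shows "Pr (\<rho> a s) t k = cl_sq p k * Pr (\<rho> (eb l \<cdot> eb k \<cdot> a) s) t l"
proof -
  let ?Y = "eb k \<cdot> eb l" and ?Za = "eb l \<cdot> eb k \<cdot> a"
  let ?A = "Pr (\<rho> a s) t k" and ?B = "Pr (\<rho> ?Za s) t l"
  let ?M = "Pr (\<rho> ?Za s) (\<rho> ?Y t) k" and ?N = "Pr (\<rho> a s) (\<rho> ?Y t) l"
  have "- ?M - cl_sq p k * cl_sq p l * ?A = 2 * cl_sq p l * ?N"
    using Pr_eb_eb_equivariance[OF kl, of "\<rho> a s" "\<rho> ?Y t" k] kl(3)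
    unfolding rho_eb_eb_swap[OF kl a] rho_eb_eb_twice[OF kl] Pr_scale_right Pr_minus_left by simp
  moreover have "cl_sq p k * cl_sq p l * ?A + ?M = 2 * cl_sq p l * ?B"
    using Pr_eb_eb_equivariance[OF kl, of "\<rho> ?Za s" t k] kl(3)
    unfolding rho_eb_eb_cancel[OF kl(1,2) a] Pr_scale_left by simp
  ultimately have "2 * cl_sq p l * (?N + ?B) = 0"
    by (simp add: algebra_simps)
  then have "?N = - ?B"
    using cl_sq_cases[of p l] by auto
  moreover have "- ?B + ?N = - (2 * cl_sq p k * ?A)"
    using Pr_eb_eb_equivariance[OF kl, of "\<rho> a s" t l] kl(3)
    unfolding rho_eb_eb_swap[OF kl a] Pr_minus_left by simp
  ultimately show ?thesis
    using cl_sq_cases[of p k] by auto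
qed

lemma Pr_0_eb_eb_skew:
  "x < n \<Longrightarrow> y < n \<Longrightarrow> x \<noteq> y \<Longrightarrow> x \<noteq> 0 \<Longrightarrow> y \<noteq> 0 \<Longrightarrow>
   Pr (\<rho> (eb x \<cdot> eb y) s) t 0 = - Pr s (\<rho> (eb x \<cdot> eb y) t) 0"
  using Pr_eb_eb_equivariance[of x y s t 0] by simp

lemma Pr_0_eprod_adjoint:
  assumes "set L \<subseteq> {..<n}" "distinct L" "0 \<notin> set L" "even (length L)"
  shows "Pr (\<rho> (eprod L) s) t 0 = Pr s (\<rho> (eprod (rev L)) t) 0"
  using assms
proof (induction L arbitrary: s t rule: induct_list012)
  case 1
  then show ?case by (simp add: eprod_Nil rho_one)
next
  case (2 x)
  then show ?case by simp
next
  case (3 x y zs)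
  then have xy: "x < n" "y < n" "x \<noteq> y" "x \<noteq> 0" "y \<noteq> 0"
    and zs: "set zs \<subseteq> {..<n}" "distinct zs" "0 \<notin> set zs" "even (length zs)"
    by auto
  have EY: "even_cl (eb x \<cdot> eb y)"
    using xy by (intro even_eb_eb)
  have Ez: "even_cl (eprod zs)" "even_cl (eprod (rev zs))"
    using zs by (auto intro: even_eprod)
  have "eprod (x # y # zs) = (eb x \<cdot> eb y) \<cdot> eprod zs"
    using xy by (simp add: eprod_Cons clmul_assoc)
  then have "Pr (\<rho> (eprod (x # y # zs)) s) t 0 = Pr (\<rho> (eb x \<cdot> eb y) (\<rho> (eprod zs) s)) t 0"
    using rho_mul[OF EY Ez(1)] by simp
  also have "\<dots> = - Pr (\<rho> (eprod zs) s) (\<rho> (eb x \<cdot> eb y) t) 0"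
    using Pr_0_eb_eb_skew[OF xy] by simp
  also have "\<dots> = - Pr s (\<rho> (eprod (rev zs)) (\<rho> (eb x \<cdot> eb y) t)) 0"
    using 3(1)[OF zs] by simp
  also have "\<dots> = - Pr s (\<rho> (eprod (rev zs) \<cdot> (eb x \<cdot> eb y)) t) 0"
    using rho_mul[OF Ez(2) EY] by simp
  also have "\<dots> = Pr s (\<rho> (eprod (rev (x # y # zs))) t) 0"
  proof -
    have "eprod (rev (x # y # zs)) = eprod (rev zs) \<cdot> eprod [y, x]"
      using zs eprod_append[of "rev zs" "[y, x]"] by simp
    also have "eprod [y, x] = cl_scale (-1) (eb x \<cdot> eb y)"
      unfolding eprod_Cons[OF xy(2)] eprod_single[OF xy(1)] by (rule eb_anticomm[OF xy(1,2,3)])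
    finally have "eprod (rev (x # y # zs)) = cl_scale (-1) (eprod (rev zs) \<cdot> (eb x \<cdot> eb y))"
      by (simp add: clmul_scale_right)
    moreover have "even_cl (eprod (rev zs) \<cdot> (eb x \<cdot> eb y))"
      using graded_clmul[OF Ez(2) EY] by simp
    ultimately show ?thesis
      using rho_minus Pr_minus_right by simp
  qed
  finally show ?case .
qed

lemma rho_double_sum:
  "\<rho> (\<lambda>C. \<Sum>i<n. \<Sum>j<n. f i j * (eb i \<cdot> eb j) C) a = (\<Sum>i<n. \<Sum>j<n. f i j *\<^sub>R \<rho> (eb i \<cdot> eb j) a)"
proof -
  let ?g = "\<lambda>i j. cl_scale (f i j) (eb i \<cdot> eb j)"
  have Eg: "even_cl (?g i j)" if "i < n" "j < n" for i j
    using that by (intro graded_scale even_eb_eb)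
  have "\<rho> (\<lambda>C. \<Sum>i<n. \<Sum>j<n. ?g i j C) a = (\<Sum>i<n. \<rho> (\<lambda>A. \<Sum>j<n. ?g i j A) a)"
    using Eg by (intro rho_sum graded_sum) auto
  also have "\<dots> = (\<Sum>i<n. \<Sum>j<n. \<rho> (?g i j) a)"
    using Eg by (intro sum.cong refl rho_sum) auto
  also have "\<dots> = (\<Sum>i<n. \<Sum>j<n. f i j *\<^sub>R \<rho> (eb i \<cdot> eb j) a)"
    by (intro sum.cong refl rho_scale) (auto intro: even_eb_eb)
  finally show ?thesis
    unfolding cl_scale_def .
qed

lemma spin_elt_eq_sum:
  "spin_elt p q c = (\<lambda>A. \<Sum>i<n. \<Sum>j<n. (- (c i j - c j i) / 4) * (eb i \<cdot> eb j) A)"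
proof
  fix A
  have "spin_elt p q c A = - (1/4) * (\<Sum>i<n. \<Sum>j<n. c i j * (eb i \<cdot> eb j) A - c i j * (eb j \<cdot> eb i) A)"
    unfolding spin_elt_def
    by (intro arg_cong[where f = "\<lambda>x. - (1/4) * x"] sum.cong refl) (simp add: clvec_std_basis right_diff_distrib)
  also have "\<dots> = - (1/4) * ((\<Sum>i<n. \<Sum>j<n. c i j * (eb i \<cdot> eb j) A) - (\<Sum>i<n. \<Sum>j<n. c j i * (eb i \<cdot> eb j) A))"
    by (subst (2) sum.swap) (simp add: sum_subtractf)
  also have "\<dots> = (\<Sum>i<n. \<Sum>j<n. (- (c i j - c j i) / 4) * (eb i \<cdot> eb j) A)"
    by (simp add: sum_subtractf[symmetric] sum_distrib_left algebra_simps diff_divide_distrib)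
  finally show "spin_elt p q c A = (\<Sum>i<n. \<Sum>j<n. (- (c i j - c j i) / 4) * (eb i \<cdot> eb j) A)" .
qed

lemma rho_spin_elt:
  "\<rho> (spin_elt p q c) s = (\<Sum>i<n. \<Sum>j<n. (- (c i j - c j i) / 4) *\<^sub>R \<rho> (eb i \<cdot> eb j) s)"
  unfolding spin_elt_eq_sum by (rule rho_double_sum)

end

lemma sum_quadratic_form_diagonal:
  fixes w :: "'a \<Rightarrow> real" and \<beta> :: "'a \<Rightarrow> 'a \<Rightarrow> real"
  assumes "finite I"
    and off: "\<And>k i. k \<in> I \<Longrightarrow> i \<in> I \<Longrightarrow> k \<noteq> i \<Longrightarrow> w k * w i * (\<beta> k i + \<beta> i k) = 0"
    and diag: "\<And>k. k \<in> I \<Longrightarrow> w k * w k * \<beta> k k = w k * w k * c"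
  shows "(\<Sum>k\<in>I. \<Sum>i\<in>I. w k * w i * \<beta> k i) = c * (\<Sum>k\<in>I. w k * w k)"
proof -
  let ?S = "\<Sum>k\<in>I. \<Sum>i\<in>I. w k * w i * \<beta> k i"
  have swap: "?S = (\<Sum>k\<in>I. \<Sum>i\<in>I. w k * w i * \<beta> i k)"
    by (subst sum.swap) (simp add: mult_ac)
  have "?S + ?S = (\<Sum>k\<in>I. \<Sum>i\<in>I. w k * w i * (\<beta> k i + \<beta> i k))"
    by (subst (2) swap) (simp add: sum.distrib[symmetric] distrib_left)
  also have "\<dots> = (\<Sum>k\<in>I. \<Sum>i\<in>I. if i = k then 2 * (w k * w k * c) else 0)"
    using off diag by (intro sum.cong refl) (auto simp: algebra_simps)
  also have "\<dots> = 2 * (c * (\<Sum>k\<in>I. w k * w k))"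
    using assms(1) by (simp add: sum_distrib_left mult_ac)
  finally show ?thesis
    by linarith
qed

section \<open>The canonical form\<close>

locale canonical_form = cl0_pairing p q \<rho> Pr
  for p q :: nat and \<rho> :: "cl \<Rightarrow> 'w::real_vector \<Rightarrow> 'w" and Pr :: "'w \<Rightarrow> 'w \<Rightarrow> vec" +
  fixes p' :: nat
  assumes p'_mod_4: "p' mod 4 = 3"
    and p'_le_p: "p' \<le> p"
begin

text \<open>Indices are shifted by one against the paper: \<open>u = e\<^sub>2 \<cdots> e\<^sub>p\<^sub>'\<close> is \<open>eprod [1..<p']\<close>,
  and \<open>\<langle>e\<^sub>1, z\<rangle>\<close> is the component \<open>z 0\<close>, so that \<open>bform\<close> is the form \<open>b\<close> (\<open>b_can_eq_bform\<close>).\<close>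

definition u :: cl where
  "u = eprod [1..<p']"

definition bform :: "'w \<Rightarrow> 'w \<Rightarrow> real" where
  "bform s t = Pr (\<rho> u s) t 0"

definition u_sign :: "nat \<Rightarrow> real" where
  "u_sign x = (if 1 \<le> x \<and> x < p' then -1 else 1)"

definition block_sign :: "nat \<Rightarrow> nat \<Rightarrow> real" where
  "block_sign i j = (if (i < p') = (j < p') then -1 else 1)"

lemma p'_eq_4k_plus_3: "p' = 4 * (p' div 4) + 3"
  using p'_mod_4 div_mult_mod_eq[of p' 4] by simp

lemma three_le_p': "3 \<le> p'"
  using p'_eq_4k_plus_3 by linarith

lemma zero_less_n: "0 < n"
  using three_le_p' p'_le_p by simp

lemma even_p'_minus_1: "even (p' - 1)"
  using p'_eq_4k_plus_3 by presburger

lemma u_indices: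
  "set [1..<p'] \<subseteq> {..<n}" "distinct [1..<p']" "0 \<notin> set [1..<p']" "even (length [1..<p'])"
  using p'_le_p even_p'_minus_1 by auto

lemma cl_sq_E: "k < p' \<Longrightarrow> cl_sq p k = -1"
  using p'_le_p unfolding cl_sq_def by simp

lemma even_u: "even_cl u"
  unfolding u_def by (rule even_eprod[OF u_indices(4)])

lemma b_can_eq_bform: "b_can p q p' \<rho> Pr s t = bform s t"
proof -
  have "b_can p q p' \<rho> Pr s t = ip p q (std_basis 0) (Pr (\<rho> u s) t)"
    unfolding b_can_def b_gen_def u_def eprod_def ..
  also have "\<dots> = - cl_sq p 0 * Pr (\<rho> u s) t 0"
    using zero_less_n by (intro ip_std_basis) simp
  finally show ?thesis
    using cl_sq_E three_le_p' unfolding bform_def by simp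
qed

text \<open>Reversing the \<open>p' - 1 = 4r + 2\<close> factors of \<open>u\<close> costs the sign \<open>(-1)\<^bsup>(2r+1)(4r+1)\<^esup> = -1\<close>;
  this is where \<open>p' \<equiv> 3 (mod 4)\<close> enters.\<close>

lemma eprod_rev_u_indices: "eprod (rev [1..<p']) = cl_scale (-1) u"
proof -
  define r where "r = p' div 4"
  have "length [1..<p'] = 4 * r + 2"
    using p'_eq_4k_plus_3 unfolding r_def by simp
  moreover have "(4 * r + 2) * (4 * r + 1) = 2 * ((2 * r + 1) * (4 * r + 1))"
    by (simp add: algebra_simps)
  ultimately have "length [1..<p'] * (length [1..<p'] - 1) div 2 = (2 * r + 1) * (4 * r + 1)"
    by simp
  moreover have "odd ((2 * r + 1) * (4 * r + 1))"
    by simp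
  ultimately have "(-1::real) ^ (length [1..<p'] * (length [1..<p'] - 1) div 2) = -1"
    by (metis neg_one_odd_power)
  then show ?thesis
    unfolding u_def using eprod_rev[OF u_indices(1,2)] by simp
qed

theorem bform_sym: "bform s t = bform t s"
proof -
  have "bform s t = Pr s (\<rho> (eprod (rev [1..<p'])) t) 0"
    unfolding bform_def u_def by (rule Pr_0_eprod_adjoint[OF u_indices])
  also have "\<dots> = - Pr s (\<rho> u t) 0"
    unfolding eprod_rev_u_indices rho_minus[OF even_u] Pr_minus_right ..
  also have "\<dots> = bform t s"
    unfolding bform_def using Pr_skew[of "\<rho> u t" s 0] by simp
  finally show ?thesis .
qed

lemma bform_add_left: "bform (a + b) t = bform a t + bform b t"
  unfolding bform_def using rho_add_vec[OF even_u] Pr_add_left by simp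

lemma bform_scale_left: "bform (c *\<^sub>R a) t = c * bform a t"
  unfolding bform_def using rho_scale_vec[OF even_u] Pr_scale_left by simp

lemma bform_add_right: "bform s (a + b) = bform s a + bform s b"
  unfolding bform_def using Pr_add_right by simp

lemma bform_scale_right: "bform s (c *\<^sub>R a) = c * bform s a"
  unfolding bform_def using Pr_scale_right by simp

lemma bform_minus_left: "bform (- a) t = - bform a t"
  using bform_scale_left[of "-1" a t] by simp

lemma bform_minus_right: "bform s (- a) = - bform s a"
  using bform_scale_right[of s "-1" a] by simp

lemma bform_sum_left: "finite I \<Longrightarrow> bform (\<Sum>i\<in>I. f i) t = (\<Sum>i\<in>I. bform (f i) t)"
  by (induction I rule: finite_induct) (simp_all add: bform_scale_left[of 0 0, simplified] bform_add_left)

lemma bform_sum_right: "finite I \<Longrightarrow> bform s (\<Sum>i\<in>I. f i) = (\<Sum>i\<in>I. bform s (f i))"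
  by (induction I rule: finite_induct) (simp_all add: bform_scale_right[of s 0 0, simplified] bform_add_right)

lemma eb_u_commute: "x < n \<Longrightarrow> eb x \<cdot> u = cl_scale (u_sign x) (u \<cdot> eb x)"
  using eb_eprod_commute[OF _ u_indices(1,2), of x] u_indices(4)
  unfolding u_def u_sign_def by (simp add: power_add)

lemma u_eb_eb_commute:
  assumes "i < n" "j < n"
  shows "u \<cdot> (eb i \<cdot> eb j) = cl_scale (u_sign i * u_sign j) ((eb i \<cdot> eb j) \<cdot> u)"
proof -
  have "(eb i \<cdot> eb j) \<cdot> u = eb i \<cdot> (eb j \<cdot> u)"
    by (simp add: clmul_assoc)
  also have "\<dots> = cl_scale (u_sign j) ((eb i \<cdot> u) \<cdot> eb j)"
    unfolding eb_u_commute[OF assms(2)] clmul_scale_right clmul_assoc ..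
  also have "\<dots> = cl_scale (u_sign i * u_sign j) (u \<cdot> (eb i \<cdot> eb j))"
    unfolding eb_u_commute[OF assms(1)] clmul_scale_left clmul_assoc by (simp add: mult.commute)
  finally show ?thesis
    by (simp add: u_sign_def)
qed

lemma rho_u_eb_eb:
  assumes "i < n" "j < n"
  shows "\<rho> u (\<rho> (eb i \<cdot> eb j) s) = (u_sign i * u_sign j) *\<^sub>R \<rho> (eb i \<cdot> eb j) (\<rho> u s)"
proof -
  have EY: "even_cl (eb i \<cdot> eb j)"
    using assms by (intro even_eb_eb)
  have EYu: "even_cl ((eb i \<cdot> eb j) \<cdot> u)"
    using graded_clmul[OF EY even_u] by simp
  have "\<rho> u (\<rho> (eb i \<cdot> eb j) s) = \<rho> (u \<cdot> (eb i \<cdot> eb j)) s"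
    using rho_mul[OF even_u EY] by simp
  also have "\<dots> = (u_sign i * u_sign j) *\<^sub>R \<rho> ((eb i \<cdot> eb j) \<cdot> u) s"
    unfolding u_eb_eb_commute[OF assms] rho_scale[OF EYu] ..
  also have "\<dots> = (u_sign i * u_sign j) *\<^sub>R \<rho> (eb i \<cdot> eb j) (\<rho> u s)"
    using rho_mul[OF EY even_u] by simp
  finally show ?thesis .
qed

lemma bform_eb_eb_adjoint_nonzero:
  assumes ij: "i < n" "j < n" "i \<noteq> j" "i \<noteq> 0" "j \<noteq> 0"
  shows "bform (\<rho> (eb i \<cdot> eb j) s) t = block_sign i j * bform s (\<rho> (eb i \<cdot> eb j) t)"
proof -
  have "bform (\<rho> (eb i \<cdot> eb j) s) t = (u_sign i * u_sign j) * Pr (\<rho> (eb i \<cdot> eb j) (\<rho> u s)) t 0"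
    unfolding bform_def rho_u_eb_eb[OF ij(1,2)] Pr_scale_left ..
  also have "\<dots> = - (u_sign i * u_sign j) * bform s (\<rho> (eb i \<cdot> eb j) t)"
    unfolding bform_def using Pr_0_eb_eb_skew[OF ij] by simp
  also have "- (u_sign i * u_sign j) = block_sign i j"
    unfolding u_sign_def block_sign_def using ij by auto
  finally show ?thesis .
qed

text \<open>For \<open>e\<^sub>1 e\<^sub>j\<close> the skew-symmetry of the first component is not available;
  instead \<open>Pr_component_shift\<close> trades the \<open>j\<close>-th component for the first.\<close>

lemma bform_eb_0_adjoint:
  assumes j: "j < n" "j \<noteq> 0"
  shows "bform (\<rho> (eb 0 \<cdot> eb j) s) t = block_sign 0 j * bform s (\<rho> (eb 0 \<cdot> eb j) t)"
proof -
  let ?Y = "eb 0 \<cdot> eb j"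
  have EY: "even_cl ?Y"
    using j zero_less_n by (intro even_eb_eb)
  have r: "\<rho> ?Y (\<rho> u s) = \<rho> (?Y \<cdot> u) s"
    using rho_mul[OF EY even_u] by simp
  have "Pr (\<rho> (?Y \<cdot> u) s) t 0 + Pr (\<rho> u s) (\<rho> ?Y t) 0
      = 2 * (cl_sq p j * cl_sq p j) * Pr (\<rho> (?Y \<cdot> u) s) t 0"
    using Pr_eb_eb_equivariance[OF zero_less_n j(1) j(2)[symmetric], of "\<rho> u s" t 0] j
    unfolding r Pr_component_shift[OF j(1) zero_less_n j(2) even_u, of s t] by (simp add: mult_ac)
  then have "Pr (\<rho> u s) (\<rho> ?Y t) 0 = Pr (\<rho> (?Y \<cdot> u) s) t 0"
    by (simp add: cl_sq_square)
  also have "\<dots> = u_sign j * bform (\<rho> ?Y s) t"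
    unfolding bform_def rho_u_eb_eb[OF zero_less_n j(1)] Pr_scale_left r[symmetric]
    by (simp add: u_sign_def)
  finally have "bform s (\<rho> ?Y t) = u_sign j * bform (\<rho> ?Y s) t"
    unfolding bform_def .
  then have "bform (\<rho> ?Y s) t = u_sign j * bform s (\<rho> ?Y t)"
    by (simp add: u_sign_def)
  moreover have "u_sign j = block_sign 0 j"
    unfolding u_sign_def block_sign_def using j three_le_p' by auto
  ultimately show ?thesis
    by simp
qed

lemma bform_eb_eb_adjoint:
  assumes ij: "i < n" "j < n" "i \<noteq> j"
  shows "bform (\<rho> (eb i \<cdot> eb j) s) t = block_sign i j * bform s (\<rho> (eb i \<cdot> eb j) t)"
proof -
  consider "i = 0" | "j = 0" | "i \<noteq> 0 \<and> j \<noteq> 0"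
    by blast
  then show ?thesis
  proof cases
    case 1
    then show ?thesis
      using bform_eb_0_adjoint[of j s t] ij by simp
  next
    case 2
    have EY: "even_cl (eb j \<cdot> eb i)"
      using ij by (intro even_eb_eb)
    have "\<rho> (eb i \<cdot> eb j) w = - \<rho> (eb j \<cdot> eb i) w" for w
      unfolding eb_anticomm[OF ij(2,1) ij(3)[symmetric]] rho_minus[OF EY] ..
    moreover have "block_sign j i = block_sign i j"
      unfolding block_sign_def by auto
    ultimately show ?thesis
      using bform_eb_0_adjoint[of i s t] ij 2 by (simp add: bform_minus_left bform_minus_right)
  next
    case 3
    then show ?thesis
      using bform_eb_eb_adjoint_nonzero ij by blast
  qed
qed

lemma bform_spin_elt_adjoint:
  assumes c: "\<forall>i<n. \<forall>j<n. c i j \<noteq> 0 \<longrightarrow> i \<noteq> j \<longrightarrow> block_sign i j = \<epsilon>"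
  shows "bform (\<rho> (spin_elt p q c) s) t = \<epsilon> * bform s (\<rho> (spin_elt p q c) t)"
proof -
  let ?d = "\<lambda>i j. - (c i j - c j i) / 4"
  have "bform (\<rho> (spin_elt p q c) s) t = (\<Sum>i<n. \<Sum>j<n. ?d i j * bform (\<rho> (eb i \<cdot> eb j) s) t)"
    unfolding rho_spin_elt bform_sum_left[OF finite_lessThan] bform_scale_left ..
  also have "\<dots> = (\<Sum>i<n. \<Sum>j<n. \<epsilon> * (?d i j * bform s (\<rho> (eb i \<cdot> eb j) t)))"
  proof (intro sum.cong refl)
    fix i j assume "i \<in> {..<n}" "j \<in> {..<n}"
    then have ij: "i < n" "j < n"
      by auto
    show "?d i j * bform (\<rho> (eb i \<cdot> eb j) s) t = \<epsilon> * (?d i j * bform s (\<rho> (eb i \<cdot> eb j) t))"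
    proof (cases "?d i j = 0")
      case False
      then have "i \<noteq> j" "c i j \<noteq> 0 \<or> c j i \<noteq> 0"
        by auto
      moreover have "block_sign j i = block_sign i j"
        unfolding block_sign_def by auto
      ultimately have "block_sign i j = \<epsilon>"
        using c ij by metis
      then show ?thesis
        using bform_eb_eb_adjoint[OF ij \<open>i \<noteq> j\<close>] by simp
    qed simp
  qed
  also have "\<dots> = \<epsilon> * bform s (\<rho> (spin_elt p q c) t)"
    unfolding rho_spin_elt bform_sum_right[OF finite_lessThan] bform_scale_right sum_distrib_left ..
  finally show ?thesis .
qed

lemma bform_spin_elt_mixed_symmetric:
  assumes "\<forall>i j. c i j \<noteq> 0 \<longrightarrow> (i < p' \<and> p' \<le> j \<and> j < n) \<or> (p' \<le> i \<and> i < n \<and> j < p')"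
  shows "bform (\<rho> (spin_elt p q c) s) t = bform s (\<rho> (spin_elt p q c) t)"
proof -
  have "\<forall>i<n. \<forall>j<n. c i j \<noteq> 0 \<longrightarrow> i \<noteq> j \<longrightarrow> block_sign i j = 1"
    using assms unfolding block_sign_def by fastforce
  from bform_spin_elt_adjoint[OF this] show ?thesis
    by simp
qed

lemma bform_spin_elt_block_skew:
  assumes "\<forall>i j. c i j \<noteq> 0 \<longrightarrow> (i < p' \<and> j < p') \<or> (p' \<le> i \<and> i < n \<and> p' \<le> j \<and> j < n)"
  shows "bform (\<rho> (spin_elt p q c) s) t = - bform s (\<rho> (spin_elt p q c) t)"
proof -
  have "\<forall>i<n. \<forall>j<n. c i j \<noteq> 0 \<longrightarrow> i \<noteq> j \<longrightarrow> block_sign i j = -1"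
    using assms unfolding block_sign_def by fastforce
  from bform_spin_elt_adjoint[OF this] show ?thesis
    by simp
qed

definition omega :: cl where
  "omega = eprod [0..<p']"

text \<open>With \<open>\<omega> = e\<^sub>1 \<cdots> e\<^sub>p\<^sub>'\<close> one has \<open>es 1 \<cdots> es (p' - 1) = -\<sigma> es 0 \<omega>\<close>, so \<open>b_gen\<close> for the
  basis \<open>es\<close> is the quadratic form of the matrix \<open>beta s t\<close> evaluated at \<open>es 0\<close>;
  on \<open>E\<close> this matrix is a multiple of the identity.\<close>

definition beta :: "'w \<Rightarrow> 'w \<Rightarrow> nat \<Rightarrow> nat \<Rightarrow> real" where
  "beta s t k i = Pr (\<rho> (eb i \<cdot> omega) s) t k"

lemma omega_eq_eb_0_u: "omega = eb 0 \<cdot> u"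
proof -
  have "[0..<p'] = 0 # [1..<p']"
    using three_le_p' upt_conv_Cons by auto
  then show ?thesis
    unfolding omega_def u_def using zero_less_n by (simp add: eprod_Cons)
qed

lemma graded_omega: "graded p q omega p'"
  unfolding omega_def using graded_eprod[of "[0..<p']"] by simp

lemma even_clvec_omega: "even_cl (clvec p q w \<cdot> omega)"
proof -
  have "graded p q (clvec p q w \<cdot> omega) (1 + p')"
    using graded_clmul[OF graded_clvec graded_omega] by blast
  moreover have "even (1 + p')"
    using even_p'_minus_1 three_le_p' by presburger
  ultimately show ?thesis
    using graded_mod2 by fastforce
qed

lemma even_eb_omega: "i < n \<Longrightarrow> even_cl (eb i \<cdot> omega)"
  using even_clvec_omega[of "std_basis i"] by (simp add: clvec_std_basis)

lemma beta_0_0: "beta s t 0 0 = - bform s t"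
proof -
  have "eb 0 \<cdot> omega = cl_scale (-1) u"
    unfolding omega_eq_eb_0_u clmul_assoc[symmetric] eb_square[OF zero_less_n] clmul_scale_left
      clmul_one_left[OF even_u]
    using cl_sq_E[of 0] three_le_p' by simp
  then show ?thesis
    unfolding beta_def bform_def using rho_minus[OF even_u] Pr_minus_left by simp
qed

lemma beta_diag:
  assumes k: "k < p'"
  shows "beta s t k k = beta s t 0 0"
proof (cases "k = 0")
  case False
  have kn: "k < n"
    using k p'_le_p by linarith
  have "eb 0 \<cdot> eb k \<cdot> (eb k \<cdot> omega) = eb 0 \<cdot> ((eb k \<cdot> eb k) \<cdot> omega)"
    by (simp add: clmul_assoc)
  also have "\<dots> = cl_scale (-1) (eb 0 \<cdot> omega)"
    unfolding eb_square[OF kn] cl_sq_E[OF k] clmul_scale_left clmul_scale_right clmul_one_left[OF graded_omega] ..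
  finally have "eb 0 \<cdot> eb k \<cdot> (eb k \<cdot> omega) = cl_scale (-1) (eb 0 \<cdot> omega)" .
  then show ?thesis
    using Pr_component_shift[OF kn zero_less_n False even_eb_omega[OF kn], of s t]
      rho_minus[OF even_eb_omega[OF zero_less_n]] Pr_minus_left cl_sq_E[OF k]
    unfolding beta_def by simp
qed simp

lemma beta_offdiag:
  assumes k: "k < p'" and i: "i < p'" and ki: "k \<noteq> i"
  shows "beta s t k i = - beta s t i k"
proof -
  have kn: "k < n" and iN: "i < n"
    using k i p'_le_p by linarith+
  have "(eb i \<cdot> eb k) \<cdot> eb i = cl_scale (-1) ((eb k \<cdot> eb i) \<cdot> eb i)"
    unfolding eb_anticomm[OF kn iN ki] clmul_scale_left ..
  also have "\<dots> = eb k"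
    unfolding clmul_assoc eb_square[OF iN] cl_sq_E[OF i] clmul_scale_right clmul_one_right[OF graded_eb[OF kn]]
    by simp
  finally have "eb i \<cdot> eb k \<cdot> (eb i \<cdot> omega) = eb k \<cdot> omega"
    by (simp add: clmul_assoc[symmetric])
  then show ?thesis
    using Pr_component_shift[OF kn iN ki even_eb_omega[OF iN], of s t] cl_sq_E[OF k]
    unfolding beta_def by simp
qed

lemma rho_clvec_omega: "\<rho> (clvec p q w \<cdot> omega) s = (\<Sum>i<n. w i *\<^sub>R \<rho> (eb i \<cdot> omega) s)"
proof -
  have "clmul p q (\<lambda>A. w i * blade {i} A) omega C = cl_scale (w i) (eb i \<cdot> omega) C" for i C
    using clmul_scale_left[of p q "w i" "blade {i}" omega] unfolding cl_scale_def by metis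
  then have "clvec p q w \<cdot> omega = (\<lambda>C. \<Sum>i<n. cl_scale (w i) (eb i \<cdot> omega) C)"
    unfolding clvec_eq_sum_blades clmul_sum_left[OF finite_lessThan] by simp
  moreover have "\<rho> (\<lambda>C. \<Sum>i<n. cl_scale (w i) (eb i \<cdot> omega) C) s = (\<Sum>i<n. \<rho> (cl_scale (w i) (eb i \<cdot> omega)) s)"
    by (rule rho_sum) (auto intro: graded_scale even_eb_omega)
  ultimately have "\<rho> (clvec p q w \<cdot> omega) s = (\<Sum>i<n. \<rho> (cl_scale (w i) (eb i \<cdot> omega)) s)"
    by simp
  also have "\<dots> = (\<Sum>i<n. w i *\<^sub>R \<rho> (eb i \<cdot> omega) s)"
    by (intro sum.cong refl) (auto intro: rho_scale even_eb_omega)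
  finally show ?thesis .
qed

lemma clprod_onb_tail:
  assumes onb: "onb_E p q p' es"
    and pr: "clprod p q (map es [0..<p']) = (\<lambda>A. \<sigma> * clprod p q (map std_basis [0..<p']) A)"
  shows "clprod p q (map es [1..<p']) = cl_scale (- \<sigma>) (clvec p q (es 0) \<cdot> omega)"
proof -
  let ?X = "clvec p q (es 0)" and ?R = "clprod p q (map es [1..<p'])"
  have "[0..<p'] = 0 # [1..<p']"
    using three_le_p' upt_conv_Cons by auto
  then have XR: "?X \<cdot> ?R = cl_scale \<sigma> omega"
    using pr unfolding omega_def eprod_def cl_scale_def clprod_def by simp
  have "ip p q (es 0) (es 0) = 1"
    using onb three_le_p' unfolding onb_E_def by simp
  then have XX: "?X \<cdot> ?X = cl_scale (-1) cl_one"
    unfolding clvec_square by simp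
  have "cl_scale (-1) ?R = ?X \<cdot> (?X \<cdot> ?R)"
    unfolding clmul_assoc[symmetric] XX clmul_scale_left clmul_one_left[OF graded_clprod] ..
  also have "\<dots> = cl_scale \<sigma> (?X \<cdot> omega)"
    unfolding XR clmul_scale_right ..
  finally have "cl_scale (-1) (cl_scale (-1) ?R) = cl_scale (-1) (cl_scale \<sigma> (?X \<cdot> omega))"
    by simp
  then show ?thesis
    by simp
qed

theorem b_gen_eq_sign_bform:
  assumes onb: "onb_E p q p' es"
    and pr: "clprod p q (map es [0..<p']) = (\<lambda>A. \<sigma> * clprod p q (map std_basis [0..<p']) A)"
  shows "b_gen p q p' \<rho> Pr es s t = \<sigma> * bform s t"
proof -
  define w where "w = es 0"
  have w0: "w i = 0" if "p' \<le> i" for i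
    using onb three_le_p' that unfolding onb_E_def subE_def w_def by auto
  have cw: "cl_sq p k * w k = - w k" for k
    using cl_sq_E[of k] w0[of k] by (cases "k < p'") auto
  have "1 = ip p q w w"
    using onb three_le_p' unfolding onb_E_def w_def by simp
  also have "\<dots> = (\<Sum>k<n. w k * w k)"
    unfolding ip_eq_sum_cl_sq cw by (simp add: sum_negf)
  finally have ww: "(\<Sum>k<n. w k * w k) = 1" ..
  have "(\<Sum>k<n. \<Sum>i<n. w k * w i * beta s t k i) = beta s t 0 0 * (\<Sum>k<n. w k * w k)"
  proof (rule sum_quadratic_form_diagonal)
    fix k i assume "k \<in> {..<n}" "i \<in> {..<n}" "k \<noteq> i"
    then show "w k * w i * (beta s t k i + beta s t i k) = 0"
      using beta_offdiag[of k i s t] w0 by (cases "k < p' \<and> i < p'") auto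
  next
    fix k
    show "w k * w k * beta s t k k = w k * w k * beta s t 0 0"
      using beta_diag[of k s t] w0[of k] by (cases "k < p'") auto
  qed simp
  then have quad: "(\<Sum>k<n. \<Sum>i<n. w k * w i * beta s t k i) = - bform s t"
    unfolding ww beta_0_0 by simp
  have "Pr (\<rho> (clprod p q (map es [1..<p'])) s) t k = - \<sigma> * (\<Sum>i<n. w i * beta s t k i)" for k
    unfolding clprod_onb_tail[OF onb pr] rho_scale[OF even_clvec_omega] rho_clvec_omega
      Pr_scale_left Pr_sum_left[OF finite_lessThan] beta_def w_def by simp
  then have "b_gen p q p' \<rho> Pr es s t = - (\<Sum>k<n. cl_sq p k * w k * (- \<sigma> * (\<Sum>i<n. w i * beta s t k i)))"
    unfolding b_gen_def ip_eq_sum_cl_sq w_def by simp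
  also have "\<dots> = - \<sigma> * (\<Sum>k<n. \<Sum>i<n. w k * w i * beta s t k i)"
    unfolding cw by (simp add: sum_distrib_left sum_negf mult_ac)
  finally show ?thesis
    unfolding quad by simp
qed

end

section \<open>Invariance under \<open>K(p', p'')\<close>\<close>

lemma even_spin_grp: "g \<in> spin_grp p q S \<Longrightarrow> graded p q g 0"
  unfolding spin_grp_def by (simp add: cl_even_iff_graded)

lemma spin_grp_right_inverse:
  assumes "h \<in> spin_grp p q S"
  obtains h' where "graded p q h' 0" "clmul p q h h' = cl_one"
proof -
  obtain xs where h: "h = clprod p q xs" and xs: "\<forall>x\<in>set xs. x \<in> S \<and> (ip p q x x = 1 \<or> ip p q x x = -1)"
    and even_len: "even (length xs)"
    using spin_grpE[OF assms] by blast
  define c where "c = (\<Prod>x\<leftarrow>xs. - ip p q x x)"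
  have "\<forall>x\<in>set xs. - ip p q x x = 1 \<or> - ip p q x x = -1"
    using xs by auto
  then have "c = 1 \<or> c = -1"
    unfolding c_def by (rule prod_list_unit_cases)
  then have "c * c = 1"
    by auto
  then have "clmul p q h (cl_scale c (clprod p q (rev xs))) = cl_one"
    unfolding h clmul_scale_right clprod_mul_rev c_def[symmetric] by simp
  moreover have "graded p q (cl_scale c (clprod p q (rev xs))) 0"
    using graded_clprod[of p q "rev xs"] even_len graded_mod2 by (intro graded_scale) fastforce
  ultimately show ?thesis
    using that by blast
qed

lemma connected_two_valued_const:
  fixes f :: "'a::topological_space \<Rightarrow> real"
  assumes "connected S" "continuous_on S f" "a \<in> S" "x \<in> S"
    and two_valued: "\<And>y. y \<in> S \<Longrightarrow> f y = f a \<or> f y = - f a"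
  shows "f x = f a"
proof (rule ccontr)
  assume "f x \<noteq> f a"
  then have fx: "f x = - f a" and fa: "f a \<noteq> 0"
    using two_valued[OF assms(4)] by auto
  have conn: "connected (f ` S)"
    using connected_continuous_image assms(1,2) by blast
  have in1: "f a \<in> f ` S" and in2: "- f a \<in> f ` S"
    using imageI[OF assms(3), of f] imageI[OF assms(4), of f] fx by simp_all
  have "0 \<in> f ` S"
  proof (cases "f a > 0")
    case True
    then show ?thesis
      using connectedD_interval[OF conn in2 in1, of 0] by simp
  next
    case False
    then show ?thesis
      using connectedD_interval[OF conn in1 in2, of 0] fa by simp
  qed
  then obtain y where "y \<in> S" "f y = 0"
    by auto
  then show False
    using two_valued fa by fastforce
qed

lemma continuous_on_cl_quadratic:
  "continuous_on S (\<lambda>g::cl. \<Sum>A\<in>I. \<Sum>B\<in>I. g A * g B * K A B)"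
proof -
  have "continuous_on S (\<lambda>g::cl. g A)" for A
    by (rule continuous_on_subset[OF continuous_on_product_coordinates]) simp
  then show ?thesis
    by (intro continuous_on_sum continuous_on_mult continuous_on_const)
qed

context canonical_form
begin

definition supported_in :: "vec \<Rightarrow> nat set \<Rightarrow> bool" where
  "supported_in x I \<longleftrightarrow> (\<forall>i. x i \<noteq> 0 \<longrightarrow> i \<in> I)"

definition block :: "nat set \<Rightarrow> bool" where
  "block I \<longleftrightarrow> I = {..<p'} \<or> I = {p'..<n}"

definition preserves_bform :: "cl \<Rightarrow> bool" where
  "preserves_bform g \<longleftrightarrow> (\<forall>s t. bform (\<rho> g s) (\<rho> g t) = bform s t)"

lemma supported_in_subE: "x \<in> subE p' \<Longrightarrow> supported_in x {..<p'}"
  unfolding subE_def supported_in_def by (metis (mono_tags) lessThan_iff mem_Collect_eq not_le)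

lemma supported_in_subE': "x \<in> subE' p' n \<Longrightarrow> supported_in x {p'..<n}"
  unfolding subE'_def in_V_def supported_in_def by (metis (mono_tags) atLeastLessThan_iff mem_Collect_eq not_le)

lemma block_less_n: "block I \<Longrightarrow> i \<in> I \<Longrightarrow> i < n"
  unfolding block_def using p'_le_p by auto

lemma bform_eb_eb_block:
  assumes I: "block I" "i \<in> I" "j \<in> I"
  shows "bform (\<rho> (eb i \<cdot> eb j) a) c = bform a (\<rho> (eb j \<cdot> eb i) c)"
proof (cases "i = j")
  case True
  have "j < n"
    using block_less_n I by blast
  then show ?thesis
    unfolding True eb_square[OF \<open>j < n\<close>] rho_scale[OF graded_one] rho_one bform_scale_left bform_scale_right
    by simp
next
  case False
  have ij: "i < n" "j < n"
    using block_less_n I by blast+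
  have "block_sign i j = -1"
    using I unfolding block_def block_sign_def by auto
  then have "bform (\<rho> (eb i \<cdot> eb j) a) c = - bform a (\<rho> (eb i \<cdot> eb j) c)"
    using bform_eb_eb_adjoint[OF ij False] by simp
  also have "\<dots> = bform a (\<rho> (eb j \<cdot> eb i) c)"
    unfolding eb_anticomm[OF ij False] rho_minus[OF even_eb_eb[OF ij]] bform_minus_right ..
  finally show ?thesis .
qed

lemma bform_clvec_clvec_adjoint:
  assumes I: "block I" and x: "supported_in x I" and y: "supported_in y I"
  shows "bform (\<rho> (clvec p q x \<cdot> clvec p q y) a) c = bform a (\<rho> (clvec p q y \<cdot> clvec p q x) c)"
proof -
  have "bform (\<rho> (clvec p q x \<cdot> clvec p q y) a) c
      = (\<Sum>i<n. \<Sum>j<n. (x i * y j) * bform (\<rho> (eb i \<cdot> eb j) a) c)"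
    unfolding clmul_clvec_eq_sum rho_double_sum bform_sum_left[OF finite_lessThan] bform_scale_left ..
  also have "\<dots> = (\<Sum>i<n. \<Sum>j<n. (y j * x i) * bform a (\<rho> (eb j \<cdot> eb i) c))"
  proof (intro sum.cong refl)
    fix i j
    show "(x i * y j) * bform (\<rho> (eb i \<cdot> eb j) a) c = (y j * x i) * bform a (\<rho> (eb j \<cdot> eb i) c)"
    proof (cases "x i = 0 \<or> y j = 0")
      case False
      then have "i \<in> I" "j \<in> I"
        using x y unfolding supported_in_def by auto
      then show ?thesis
        using bform_eb_eb_block[OF I] by simp
    qed auto
  qed
  also have "\<dots> = (\<Sum>j<n. \<Sum>i<n. (y j * x i) * bform a (\<rho> (eb j \<cdot> eb i) c))"
    by (rule sum.swap)
  also have "\<dots> = bform a (\<rho> (clvec p q y \<cdot> clvec p q x) c)"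
    unfolding clmul_clvec_eq_sum rho_double_sum bform_sum_right[OF finite_lessThan] bform_scale_right ..
  finally show ?thesis .
qed

lemma even_clvec_clvec: "even_cl (clvec p q x \<cdot> clvec p q y)"
  using graded_clmul[OF graded_clvec graded_clvec, of p q x y] graded_mod2 by fastforce

lemma bform_clvec_clvec_invariant:
  assumes I: "block I" and x: "supported_in x I" and y: "supported_in y I"
  shows "bform (\<rho> (clvec p q x \<cdot> clvec p q y) s) (\<rho> (clvec p q x \<cdot> clvec p q y) t)
    = ip p q x x * ip p q y y * bform s t"
proof -
  let ?X = "clvec p q x" and ?Y = "clvec p q y"
  have "(?Y \<cdot> ?X) \<cdot> (?X \<cdot> ?Y) = ?Y \<cdot> ((?X \<cdot> ?X) \<cdot> ?Y)"
    by (simp add: clmul_assoc)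
  also have "\<dots> = cl_scale (ip p q x x * ip p q y y) cl_one"
    unfolding clvec_square clmul_scale_left clmul_scale_right clmul_one_left[OF graded_clvec] by simp
  finally have YXXY: "(?Y \<cdot> ?X) \<cdot> (?X \<cdot> ?Y) = cl_scale (ip p q x x * ip p q y y) cl_one" .
  have "bform (\<rho> (?X \<cdot> ?Y) s) (\<rho> (?X \<cdot> ?Y) t) = bform s (\<rho> (?Y \<cdot> ?X) (\<rho> (?X \<cdot> ?Y) t))"
    by (rule bform_clvec_clvec_adjoint[OF I x y])
  also have "\<dots> = bform s (\<rho> ((?Y \<cdot> ?X) \<cdot> (?X \<cdot> ?Y)) t)"
    using rho_mul[OF even_clvec_clvec even_clvec_clvec] by simp
  finally show ?thesis
    unfolding YXXY rho_scale[OF graded_one] rho_one bform_scale_right .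
qed

lemma bform_clprod_invariant:
  assumes I: "block I" and "\<forall>x\<in>set xs. supported_in x I" "even (length xs)"
  shows "bform (\<rho> (clprod p q xs) s) (\<rho> (clprod p q xs) t) = (\<Prod>x\<leftarrow>xs. ip p q x x) * bform s t"
  using assms(2,3)
proof (induction xs arbitrary: s t rule: induct_list012)
  case 1
  then show ?case by (simp add: clprod_def rho_one)
next
  case (2 x)
  then show ?case by simp
next
  case (3 x y zs)
  have "even_cl (clprod p q zs)"
    using 3 graded_clprod[of p q zs] graded_mod2 by fastforce
  then have "\<rho> (clprod p q (x # y # zs)) w = \<rho> (clvec p q x \<cdot> clvec p q y) (\<rho> (clprod p q zs) w)" for w
    unfolding clprod_Cons clmul_assoc[symmetric] using rho_mul[OF even_clvec_clvec] by blast
  then show ?case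
    using bform_clvec_clvec_invariant[OF I] 3 by (simp add: mult_ac)
qed

lemma ip_E_nonneg: "x \<in> subE p' \<Longrightarrow> ip p q x x \<ge> 0"
proof -
  assume x: "x \<in> subE p'"
  have "cl_sq p k * x k = - x k" for k
    using cl_sq_E[of k] x unfolding subE_def by (cases "k < p'") auto
  then have "ip p q x x = (\<Sum>k<n. x k * x k)"
    unfolding ip_eq_sum_cl_sq by (simp add: sum_negf)
  then show ?thesis
    by (simp add: sum_nonneg)
qed

theorem bform_spin_E_invariant:
  assumes "g \<in> spin_grp p q (subE p')"
  shows "bform (\<rho> g s) (\<rho> g t) = bform s t"
proof -
  obtain xs where g: "g = clprod p q xs"
    and xs: "\<forall>x\<in>set xs. x \<in> subE p' \<and> (ip p q x x = 1 \<or> ip p q x x = -1)"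
    and even_len: "even (length xs)"
    using spin_grpE[OF assms] by blast
  have "\<forall>x\<in>set xs. supported_in x {..<p'}"
    using xs supported_in_subE by blast
  moreover have "(\<Prod>x\<leftarrow>xs. ip p q x x) = 1"
    using xs ip_E_nonneg by (induction xs) fastforce+
  ultimately show ?thesis
    unfolding g using bform_clprod_invariant[of "{..<p'}"] even_len unfolding block_def by simp
qed

lemma bform_spin_E'_invariant_up_to_sign:
  assumes "g \<in> spin_grp p q (subE' p' n)"
  shows "bform (\<rho> g s) (\<rho> g t) = bform s t \<or> bform (\<rho> g s) (\<rho> g t) = - bform s t"
proof -
  obtain xs where g: "g = clprod p q xs"
    and xs: "\<forall>x\<in>set xs. x \<in> subE' p' n \<and> (ip p q x x = 1 \<or> ip p q x x = -1)"
    and even_len: "even (length xs)"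
    using spin_grpE[OF assms] by blast
  have "\<forall>x\<in>set xs. supported_in x {p'..<n}"
    using xs supported_in_subE' by blast
  moreover have "(\<Prod>x\<leftarrow>xs. ip p q x x) = 1 \<or> (\<Prod>x\<leftarrow>xs. ip p q x x) = -1"
    using xs by (intro prod_list_unit_cases) auto
  ultimately show ?thesis
    unfolding g using bform_clprod_invariant[of "{p'..<n}"] even_len unfolding block_def by auto
qed

definition even_blades :: "nat set set" where
  "even_blades = {A \<in> Pow {..<n}. even (card A)}"

lemma finite_even_blades: "finite even_blades"
  unfolding even_blades_def by simp

lemma even_blade: "A \<in> even_blades \<Longrightarrow> even_cl (blade A)"
  unfolding even_blades_def by (intro graded_blade) auto

lemma even_cl_eq_sum_blades:
  assumes "even_cl g"
  shows "g = (\<lambda>C. \<Sum>A\<in>even_blades. cl_scale (g A) (blade A) C)"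
proof
  fix C
  have "(\<Sum>A\<in>even_blades. cl_scale (g A) (blade A) C) = (\<Sum>A\<in>even_blades. if A = C then g C else 0)"
    by (rule sum.cong) (auto simp: cl_scale_def blade_def)
  moreover have "C \<notin> even_blades \<Longrightarrow> g C = 0"
    using assms unfolding graded_def even_blades_def by auto
  ultimately show "g C = (\<Sum>A\<in>even_blades. cl_scale (g A) (blade A) C)"
    using finite_even_blades by auto
qed

lemma bform_rho_eq_sum_blades:
  assumes g: "even_cl g"
  shows "bform (\<rho> g s) (\<rho> g t)
    = (\<Sum>A\<in>even_blades. \<Sum>B\<in>even_blades. g A * g B * bform (\<rho> (blade A) s) (\<rho> (blade B) t))"
proof -
  have r: "\<rho> g w = (\<Sum>A\<in>even_blades. g A *\<^sub>R \<rho> (blade A) w)" for w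
  proof -
    have "\<rho> g w = \<rho> (\<lambda>C. \<Sum>A\<in>even_blades. cl_scale (g A) (blade A) C) w"
      using even_cl_eq_sum_blades[OF g] by metis
    also have "\<dots> = (\<Sum>A\<in>even_blades. \<rho> (cl_scale (g A) (blade A)) w)"
      using finite_even_blades by (rule rho_sum) (intro graded_scale even_blade)
    also have "\<dots> = (\<Sum>A\<in>even_blades. g A *\<^sub>R \<rho> (blade A) w)"
      by (intro sum.cong refl rho_scale even_blade)
    finally show ?thesis .
  qed
  show ?thesis
    unfolding r bform_sum_left[OF finite_even_blades] bform_scale_left
    unfolding bform_sum_right[OF finite_even_blades] bform_scale_right
    by (simp add: sum_distrib_left mult_ac)
qed

text \<open>On \<open>Spin(E')\<close> the form is preserved up to sign; since \<open>g \<mapsto> b(g s, g t)\<close> is a continuous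
  (quadratic) function of \<open>g\<close>, the sign is constant on the identity component.\<close>

theorem bform_spin0_E'_invariant:
  assumes g: "g \<in> spin0_grp p q (subE' p' n)"
  shows "bform (\<rho> g s) (\<rho> g t) = bform s t"
proof -
  let ?C = "connected_component_set (spin_grp p q (subE' p' n)) cl_one"
  let ?f = "\<lambda>h. \<Sum>A\<in>even_blades. \<Sum>B\<in>even_blades. h A * h B * bform (\<rho> (blade A) s) (\<rho> (blade B) t)"
  have gC: "g \<in> ?C"
    using g unfolding spin0_grp_def .
  have spin: "h \<in> spin_grp p q (subE' p' n)" if "h \<in> ?C" for h
    using connected_component_subset that by blast
  have f: "?f h = bform (\<rho> h s) (\<rho> h t)" if "h \<in> ?C" for h
    using bform_rho_eq_sum_blades[OF even_spin_grp[OF spin[OF that]]] by simp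
  have "cl_one \<in> spin_grp p q (subE' p' n)"
    using gC connected_component_eq_empty by blast
  then have oneC: "cl_one \<in> ?C"
    by simp
  have "?f g = ?f cl_one"
  proof (rule connected_two_valued_const[OF connected_connected_component continuous_on_cl_quadratic oneC gC])
    fix h assume "h \<in> ?C"
    then show "?f h = ?f cl_one \<or> ?f h = - ?f cl_one"
      unfolding f[OF oneC] f[OF \<open>h \<in> ?C\<close>] rho_one by (rule bform_spin_E'_invariant_up_to_sign[OF spin])
  qed
  then show ?thesis
    unfolding f[OF gC] f[OF oneC] rho_one .
qed

lemma preserves_bform_mul:
  assumes "even_cl g" "even_cl h" "preserves_bform g" "preserves_bform h"
  shows "preserves_bform (g \<cdot> h)"
  using assms rho_mul unfolding preserves_bform_def by simp

lemma preserves_bform_right_inverse: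
  assumes "even_cl h" "even_cl h'" "h \<cdot> h' = cl_one" "preserves_bform h"
  shows "preserves_bform h'"
  unfolding preserves_bform_def
proof (intro allI)
  fix s t
  have "bform (\<rho> h' s) (\<rho> h' t) = bform (\<rho> h (\<rho> h' s)) (\<rho> h (\<rho> h' t))"
    using assms(4) unfolding preserves_bform_def by simp
  also have "\<dots> = bform s t"
    using rho_mul[OF assms(1,2), symmetric] unfolding assms(3) rho_one by simp
  finally show "bform (\<rho> h' s) (\<rho> h' t) = bform s t" .
qed

lemma generator_preserves_bform:
  assumes "h \<in> spin_grp p q (subE p') \<union> spin0_grp p q (subE' p' n)"
  shows "h \<in> spin_grp p q (subE p') \<union> spin_grp p q (subE' p' n)" "preserves_bform h"
  using assms bform_spin_E_invariant bform_spin0_E'_invariant connected_component_subset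
  unfolding spin0_grp_def preserves_bform_def by blast+

text \<open>An inverse \<open>g\<close> of a generator \<open>h\<close> need not be supported on blades of \<open>V\<close>, so it is
  replaced by \<open>g \<cdot> 1\<close>, the right inverse of \<open>h\<close> in the even subalgebra.\<close>

lemma generator_inverse_preserves_bform:
  assumes h: "h \<in> spin_grp p q (subE p') \<union> spin0_grp p q (subE' p' n)"
    and gh: "g \<cdot> h = cl_one"
  shows "even_cl (g \<cdot> cl_one) \<and> preserves_bform (g \<cdot> cl_one)"
proof -
  obtain S where hS: "h \<in> spin_grp p q S"
    using generator_preserves_bform(1)[OF h] by blast
  obtain h' where h': "even_cl h'" "h \<cdot> h' = cl_one"
    using spin_grp_right_inverse[OF hS] by blast
  have "g \<cdot> cl_one = (g \<cdot> h) \<cdot> h'"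
    unfolding clmul_assoc h'(2) ..
  also have "\<dots> = h'"
    unfolding gh clmul_one_left[OF h'(1)] ..
  finally show ?thesis
    using preserves_bform_right_inverse[OF even_spin_grp[OF hS] h'] generator_preserves_bform(2)[OF h] h'(1)
    by simp
qed

theorem bform_K_grp_invariant:
  assumes "g \<in> K_grp p q p'"
  shows "bform (\<rho> g s) (\<rho> g t) = bform s t"
proof -
  let ?G = "spin_grp p q (subE p') \<union> spin0_grp p q (subE' p' n)"
  obtain gs where g: "g = foldr (clmul p q) gs cl_one"
    and gs: "\<forall>g\<in>set gs. g \<in> ?G \<or> (\<exists>h\<in>?G. h \<cdot> g = cl_one \<and> g \<cdot> h = cl_one)"
    using assms unfolding K_grp_def gen_grp_def by blast
  have "even_cl (foldr (clmul p q) gs cl_one) \<and> preserves_bform (foldr (clmul p q) gs cl_one)"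
    using gs
  proof (induction gs)
    case Nil
    then show ?case
      using graded_one rho_one unfolding preserves_bform_def by simp
  next
    case (Cons x xs)
    let ?V = "foldr (clmul p q) xs cl_one"
    have V: "even_cl ?V" "preserves_bform ?V"
      using Cons by auto
    have "even_cl (x \<cdot> cl_one) \<and> preserves_bform (x \<cdot> cl_one)"
    proof (cases "x \<in> ?G")
      case True
      then show ?thesis
        using generator_preserves_bform even_spin_grp clmul_one_right by (metis Un_iff)
    next
      case False
      then show ?thesis
        using Cons.prems generator_inverse_preserves_bform by auto
    qed
    moreover have "foldr (clmul p q) (x # xs) cl_one = (x \<cdot> cl_one) \<cdot> ?V"
      unfolding clmul_assoc clmul_one_left[OF V(1)] by simp
    ultimately show ?case
      using V graded_clmul preserves_bform_mul by fastforce
  qed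
  then show ?thesis
    unfolding g preserves_bform_def by blast
qed

end

theorem mainTheorem1:
  fixes p' p'' q :: nat
    and \<rho> :: "cl \<Rightarrow> 'w::real_vector \<Rightarrow> 'w"
    and Pr :: "'w \<Rightarrow> 'w \<Rightarrow> vec"
  defines "p \<equiv> p' + p''"
  defines "n \<equiv> p' + p'' + q"
  defines "b \<equiv> b_can (p' + p'') q p' \<rho> Pr"
  assumes module: "cl0_module p q \<rho>"
    and equiv: "equivariant_pairing p q \<rho> Pr"
    and p'_mod: "p' mod 4 = 3"
  shows
    "(\<forall>es \<sigma>. onb_E p q p' es \<and> (\<sigma> = 1 \<or> \<sigma> = -1) \<and>
        clprod p q (map es [0..<p']) = (\<lambda>A. \<sigma> * clprod p q (map std_basis [0..<p']) A)
        \<longrightarrow> (\<forall>s t. b_gen p q p' \<rho> Pr es s t = \<sigma> * b s t))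
   \<and> (\<forall>s t. b s t = b t s)
   \<and> (\<forall>g\<in>K_grp p q p'. \<forall>s t. b (\<rho> g s) (\<rho> g t) = b s t)
   \<and> (\<forall>c. (\<forall>i j. c i j \<noteq> 0 \<longrightarrow> (i < p' \<and> p' \<le> j \<and> j < n) \<or> (p' \<le> i \<and> i < n \<and> j < p'))
        \<longrightarrow> (\<forall>s t. b (\<rho> (spin_elt p q c) s) t = b s (\<rho> (spin_elt p q c) t)))
   \<and> (\<forall>c. (\<forall>i j. c i j \<noteq> 0 \<longrightarrow> (i < p' \<and> j < p') \<or> (p' \<le> i \<and> i < n \<and> p' \<le> j \<and> j < n))
        \<longrightarrow> (\<forall>s t. b (\<rho> (spin_elt p q c) s) t = - b s (\<rho> (spin_elt p q c) t)))"
proof -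
  interpret canonical_form p q \<rho> Pr p'
    using module equiv p'_mod by unfold_locales (simp_all add: p_def)
  have b: "b = bform"
    using b_can_eq_bform by (simp add: b_def p_def fun_eq_iff)
  have n: "n = p + q"
    by (simp add: n_def p_def)
  show ?thesis
    unfolding b n
    using b_gen_eq_sign_bform bform_sym bform_K_grp_invariant
      bform_spin_elt_mixed_symmetric bform_spin_elt_block_skew
    by blast
qed

end
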